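(* Let $A,B\in\mathcal K[\partial]$ ($B\neq0$) be integrable differential operators such that the rational operator $AB^{-1}$ is hereditary. Then the pair $(A,B)$ is integrable.
   Context: $\mathcal V$ is an algebra of differential functions in one variable $u$ (commutative $\mathbb C$-algebra containing $R=\mathbb C[u,u',\dots]$ with commuting derivations $\partial/\partial u^{(n)}$ extending those of $R$ and $\partial/\partial x$ commuting with them and vanishing on $R$, each element having finitely many nonzero partial derivatives); total derivative $\partial=\sum_nu^{(n+1)}\frac{\partial}{\partial u^{(n)}}+\frac{\partial}{\partial x}$. Standing assumptions: $\mathcal V$ is a normal domain with fraction field $\mathcal K$; $\mathcal C=\ker\partial$ is algebraically closed. $X_F=\sum_nF^{(n)}\frac{\partial}{\partial u^{(n)}}$; $D_F=\sum_n\frac{\partial F}{\partial u^{(n)}}\partial^n$. Operators: $\mathcal K[\partial]$ with $\partial a=a\partial+a'$; pseudodifferential with $\partial^{-1}a=\sum_{n\ge0}(-1)^na^{(n)}\partial^{-n-1}$. $X_F$ acts on operators coefficientwise; $\mathcal L_F(L)=X_F(L)-[D_F,L]$; $L=AB^{-1}$ is hereditary if $\mathcal L_{A(F)}(L)=L\,\mathcal L_{B(F)}(L)$ for all $F\in\mathcal V$. For $P=\sum p_k\partial^k$, $(D_P)_F=\sum_kF^{(k)}D_{p_k}$; bidifferential $M=\sum M_{kl}\partial_1^k\partial_2^l$ ($M_{kl}\in\mathcal K$), $M_F=\sum M_{kl}F^{(k)}\partial^l$. A differential operator $A$ is integrable if there is a bidifferential $M$ with $X_{A(F)}(A)-(D_A)_FA=AM_F$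 for all $F\in\mathcal V$. A pair $(A,B)$ is integrable if there are bidifferential $M,N$ with $X_{(A+\lambda B)(F)}(A+\lambda B)-(D_{A+\lambda B})_F(A+\lambda B)=(A+\lambda B)(M+\lambda N)_F$ for all $F\in\mathcal V$, $\lambda\in\mathcal C$. *)

theory Defs
  imports Complex_Main "HOL-Computational_Algebra.Polynomial"
begin

text \<open>
  An algebra of differential functions in one variable u, presented inside its
  fraction field K (the type 'k).  V is the subring, emb embeds the complex
  numbers, uu n is u^(n), pd n is the partial derivative by u^(n) and px is the
  partial derivative by x.  The derivations are given on all of K (their unique
  extension from V to the fraction field).
\<close>

record 'k dfa =
  V :: "'k set"
  emb :: "complex \<Rightarrow> 'k"
  uu :: "nat \<Rightarrow> 'k"
  pd :: "nat \<Rightarrow> 'k \<Rightarrow> 'k"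
  px :: "'k \<Rightarrow> 'k"

definition is_derivation :: "('k::field \<Rightarrow> 'k) \<Rightarrow> bool" where
  "is_derivation d \<longleftrightarrow> (\<forall>a b. d (a + b) = d a + d b) \<and> (\<forall>a b. d (a * b) = d a * b + a * d b)"

definition tot :: "('k::field_char_0) dfa \<Rightarrow> 'k \<Rightarrow> 'k" where
  "tot S f = (\<Sum>n\<in>{n. pd S n f \<noteq> 0}. uu S (Suc n) * pd S n f) + px S f"

definition constsV :: "('k::field_char_0) dfa \<Rightarrow> 'k set" where
  "constsV S = {c \<in> V S. tot S c = 0}"

definition diff_alg :: "('k::field_char_0) dfa \<Rightarrow> bool" where
  "diff_alg S \<longleftrightarrow>
     \<comment> \<open>V is a subring of K containing C and the u^(n)\<close>
     0 \<in> V S \<and> 1 \<in> V S \<and>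
     (\<forall>a\<in>V S. \<forall>b\<in>V S. a + b \<in> V S \<and> a - b \<in> V S \<and> a * b \<in> V S) \<and>
     (\<forall>c. emb S c \<in> V S) \<and> (\<forall>n. uu S n \<in> V S) \<and>
     \<comment> \<open>emb is a ring homomorphism from the complex numbers\<close>
     emb S 1 = 1 \<and> (\<forall>a b. emb S (a + b) = emb S a + emb S b) \<and>
     (\<forall>a b. emb S (a * b) = emb S a * emb S b) \<and>
     \<comment> \<open>the partial derivatives: C-linear derivations extending those of R\<close>
     (\<forall>n. is_derivation (pd S n)) \<and> is_derivation (px S) \<and>
     (\<forall>n c. pd S n (emb S c) = 0) \<and> (\<forall>c. px S (emb S c) = 0) \<and>
     (\<forall>n m. pd S n (uu S m) = (if n = m then 1 else 0)) \<and>
     (\<forall>m. px S (uu S m) = 0) \<and>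
     (\<forall>n. \<forall>f\<in>V S. pd S n f \<in> V S) \<and> (\<forall>f\<in>V S. px S f \<in> V S) \<and>
     \<comment> \<open>commutation\<close>
     (\<forall>n m. \<forall>f\<in>V S. pd S n (pd S m f) = pd S m (pd S n f)) \<and>
     (\<forall>n. \<forall>f\<in>V S. pd S n (px S f) = px S (pd S n f)) \<and>
     \<comment> \<open>finitely many nonzero partial derivatives\<close>
     (\<forall>f\<in>V S. finite {n. pd S n f \<noteq> 0}) \<and>
     \<comment> \<open>K is the fraction field of V\<close>
     (\<forall>x. \<exists>a\<in>V S. \<exists>b\<in>V S. b \<noteq> 0 \<and> x = a / b) \<and>
     \<comment> \<open>V is normal (integrally closed in K)\<close>
     (\<forall>p x. lead_coeff p = 1 \<and> (\<forall>i. coeff p i \<in> V S) \<and> poly p x = 0 \<longrightarrow> x \<in> V S) \<and>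
     \<comment> \<open>C = ker of the total derivative is algebraically closed\<close>
     (\<forall>p. degree p > 0 \<and> (\<forall>i. coeff p i \<in> constsV S) \<longrightarrow> (\<exists>x\<in>constsV S. poly p x = 0))"

definition ders :: "('k::field_char_0) dfa \<Rightarrow> nat \<Rightarrow> 'k \<Rightarrow> 'k" where
  "ders S k f = (tot S ^^ k) f"

text \<open>Pseudodifferential operators: coefficient of \<partial>^j, support bounded above.\<close>
type_synonym 'k op = "int \<Rightarrow> 'k"

definition is_pdo :: "('k::zero) op \<Rightarrow> bool" where
  "is_pdo P \<longleftrightarrow> (\<exists>N. \<forall>j>N. P j = 0)"

definition is_dop :: "('k::zero) op \<Rightarrow> bool" where
  "is_dop P \<longleftrightarrow> is_pdo P \<and> (\<forall>j<0. P j = 0)"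

definition op_one :: "('k::{zero,one}) op" where
  "op_one = (\<lambda>j. if j = 0 then 1 else 0)"

text \<open>Product: (a \<partial>^m)(b \<partial>^n) = \<Sum>_k binom(m,k) a b^(k) \<partial>^(m+n-k).\<close>
definition pmul :: "('k::field_char_0) dfa \<Rightarrow> 'k op \<Rightarrow> 'k op \<Rightarrow> 'k op" where
  "pmul S P Q = (\<lambda>j. \<Sum>(m,k)\<in>{(m,k). P m \<noteq> 0 \<and> Q (j - m + int k) \<noteq> 0}.
      ((of_int m :: 'k) gchoose k) * P m * ders S k (Q (j - m + int k)))"

definition pinv :: "('k::field_char_0) dfa \<Rightarrow> 'k op \<Rightarrow> 'k op" where
  "pinv S B = (THE C. is_pdo C \<and> pmul S C B = op_one \<and> pmul S B C = op_one)"

definition dapp :: "('k::field_char_0) dfa \<Rightarrow> 'k op \<Rightarrow> 'k \<Rightarrow> 'k" where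
  "dapp S A F = (\<Sum>k\<in>{k. A (int k) \<noteq> 0}. A (int k) * ders S k F)"

definition Xf :: "('k::field_char_0) dfa \<Rightarrow> 'k \<Rightarrow> 'k \<Rightarrow> 'k" where
  "Xf S F g = (\<Sum>n\<in>{n. pd S n g \<noteq> 0}. ders S n F * pd S n g)"

definition Xop :: "('k::field_char_0) dfa \<Rightarrow> 'k \<Rightarrow> 'k op \<Rightarrow> 'k op" where
  "Xop S F L = (\<lambda>j. Xf S F (L j))"

definition Dfr :: "('k::field_char_0) dfa \<Rightarrow> 'k \<Rightarrow> 'k op" where
  "Dfr S F = (\<lambda>j. if 0 \<le> j then pd S (nat j) F else 0)"

definition Lie :: "('k::field_char_0) dfa \<Rightarrow> 'k \<Rightarrow> 'k op \<Rightarrow> 'k op" where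
  "Lie S F L = (\<lambda>j. Xop S F L j - (pmul S (Dfr S F) L j - pmul S L (Dfr S F) j))"

definition hereditary :: "('k::field_char_0) dfa \<Rightarrow> 'k op \<Rightarrow> 'k op \<Rightarrow> bool" where
  "hereditary S A B \<longleftrightarrow>
     (let L = pmul S A (pinv S B) in
      \<forall>F\<in>V S. Lie S (dapp S A F) L = pmul S L (Lie S (dapp S B F) L))"

definition DopF :: "('k::field_char_0) dfa \<Rightarrow> 'k op \<Rightarrow> 'k \<Rightarrow> 'k op" where
  "DopF S P F = (\<lambda>n. if 0 \<le> n then
      (\<Sum>k\<in>{k. P (int k) \<noteq> 0}. ders S k F * pd S (nat n) (P (int k))) else 0)"

text \<open>Bidifferential operators \<Sum> M_kl \<partial>_1^k \<partial>_2^l and M_F = \<Sum> M_kl F^(k) \<partial>^l.\<close>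
definition is_bidiff :: "(nat \<Rightarrow> nat \<Rightarrow> 'k::zero) \<Rightarrow> bool" where
  "is_bidiff M \<longleftrightarrow> finite {(k,l). M k l \<noteq> 0}"

definition bidF :: "('k::field_char_0) dfa \<Rightarrow> (nat \<Rightarrow> nat \<Rightarrow> 'k) \<Rightarrow> 'k \<Rightarrow> 'k op" where
  "bidF S M F = (\<lambda>l. if 0 \<le> l then
      (\<Sum>k\<in>{k. M k (nat l) \<noteq> 0}. M k (nat l) * ders S k F) else 0)"

definition integrable_op :: "('k::field_char_0) dfa \<Rightarrow> 'k op \<Rightarrow> bool" where
  "integrable_op S A \<longleftrightarrow> (\<exists>M. is_bidiff M \<and> (\<forall>F\<in>V S.
     (\<lambda>j. Xop S (dapp S A F) A j - pmul S (DopF S A F) A j) = pmul S A (bidF S M F)))"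

definition integrable_pair :: "('k::field_char_0) dfa \<Rightarrow> 'k op \<Rightarrow> 'k op \<Rightarrow> bool" where
  "integrable_pair S A B \<longleftrightarrow> (\<exists>M N. is_bidiff M \<and> is_bidiff N \<and>
     (\<forall>F\<in>V S. \<forall>lam\<in>constsV S.
       (let P = (\<lambda>j. A j + lam * B j); Q = (\<lambda>k l. M k l + lam * N k l) in
        (\<lambda>j. Xop S (dapp S P F) P j - pmul S (DopF S P F) P j) = pmul S P (bidF S Q F))))"

end

theory Submission
  imports Defs "HOL-Library.Groups_Big_Fun" "HOL-Computational_Algebra.Formal_Power_Series"
begin

text \<open>
  Put L = A B^-1 and write \<L>_G for the Lie derivative along X_G.  Pseudodifferential
  operators form a ring without zero divisors on which \<L>_G acts as a derivation, and
  L B = A.  Hence multiplying the hereditary identity \<L>_A(F) L = L \<L>_B(F) L by B on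
  the right gives \<L>_A(F) A - L \<L>_A(F) B = L (\<L>_B(F) A - L \<L>_B(F) B).
  Since D_(A(F)) = (D_A)_F + A D_F, the integrability identities of A and B turn this into
  L W = 0, where W = 0 is exactly the part of the integrability identity of the pencil
  A + \<lambda> B (with bidifferential operator M + \<lambda> N) that is linear in \<lambda>.
  For A \<noteq> 0 we cancel L; the identity for the pencil then follows by bilinearity.
\<close>

section \<open>Derivations of a field\<close>

lemma derivation_add: "is_derivation d \<Longrightarrow> d (a + b) = d a + d b"
  by (simp add: is_derivation_def)

lemma derivation_mult: "is_derivation d \<Longrightarrow> d (a * b) = d a * b + a * d b"
  by (simp add: is_derivation_def)

lemma derivation_zero: "is_derivation d \<Longrightarrow> d 0 = 0"
  using derivation_add[of d 0 0] by (metis add_cancel_right_right add_0)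

lemma derivation_one: "is_derivation d \<Longrightarrow> d 1 = 0"
  using derivation_mult[of d 1 1] by (metis add_cancel_right_right mult_1 mult_1_right)

lemma derivation_uminus: "is_derivation d \<Longrightarrow> d (- a) = - d a"
proof -
  assume D: "is_derivation d"
  have "d (a + - a) = 0" by (simp add: derivation_zero[OF D])
  then show ?thesis using derivation_add[OF D, of a "-a"] by (simp add: add_eq_0_iff)
qed

lemma derivation_diff: "is_derivation d \<Longrightarrow> d (a - b) = d a - d b"
  using derivation_add[of d a "-b"] derivation_uminus[of d b] by simp

lemma derivation_sum: "is_derivation d \<Longrightarrow> d (sum f A) = sum (\<lambda>x. d (f x)) A"
  by (induction A rule: infinite_finite_induct) (auto simp: derivation_zero derivation_add)

lemma derivation_inverse:
  assumes D: "is_derivation d" shows "d (inverse (b::'k::field)) = - d b * inverse b * inverse b"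
proof (cases "b = 0")
  case True then show ?thesis by (simp add: derivation_zero[OF D])
next
  case False
  have "d (b * inverse b) = 0" using False derivation_one[OF D] by simp
  then have e: "d b * inverse b + b * d (inverse b) = 0" using derivation_mult[OF D] by simp
  then have "b * d (inverse b) = - (d b * inverse b)" by (simp add: eq_neg_iff_add_eq_0 add.commute)
  then have "inverse b * (b * d (inverse b)) = inverse b * (- (d b * inverse b))" by simp
  then have "d (inverse b) = inverse b * (- (d b * inverse b))"
    using False by (simp add: mult.assoc[symmetric])
  then show ?thesis by (simp add: ac_simps)
qed

lemma derivation_divide:
  assumes D: "is_derivation d" shows "d ((a::'k::field) / b) = (d a * b - a * d b) * inverse b * inverse b"
proof (cases "b = 0")
  case True then show ?thesis by (simp add: derivation_zero[OF D])
next
  case False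
  have "d (a * inverse b) = d a * inverse b + a * d (inverse b)" by (rule derivation_mult[OF D])
  also have "\<dots> = (d a * b - a * d b) * inverse b * inverse b"
  proof -
    have "d a * inverse b = d a * b * inverse b * inverse b" using False by simp
    then show ?thesis by (simp add: derivation_inverse[OF D] algebra_simps)
  qed
  finally show ?thesis by (simp add: divide_inverse)
qed

lemma derivation_eq_on_fractions:
  assumes D1: "is_derivation d1" and D2: "is_derivation d2"
    and fraction: "\<exists>a\<in>W. \<exists>b\<in>W. b \<noteq> 0 \<and> x = a / b"
    and eq: "\<forall>v\<in>W. d1 v = d2 v"
  shows "d1 (x::'k::field) = d2 x"
proof -
  obtain a b where "a \<in> W" "b \<in> W" "x = a / b" using fraction by blast
  then show ?thesis using eq by (simp add: derivation_divide[OF D1] derivation_divide[OF D2])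
qed

lemma derivation_commutator: "is_derivation d1 \<Longrightarrow> is_derivation d2 \<Longrightarrow> is_derivation (\<lambda>x. d1 (d2 x) - d2 (d1 x))"
  unfolding is_derivation_def by (simp add: algebra_simps)

lemma derivation_of_nat: "is_derivation d \<Longrightarrow> d (of_nat n) = 0"
  by (induction n) (auto simp: derivation_add derivation_one derivation_zero)

lemma is_derivation_zero: "is_derivation (\<lambda>x. 0)"
  unfolding is_derivation_def by simp

lemma derivation_of_int: "is_derivation d \<Longrightarrow> d (of_int z) = 0"
  by (cases z rule: int_cases) (auto simp: derivation_of_nat derivation_uminus derivation_diff derivation_one)

lemma derivation_prod_const: "is_derivation d \<Longrightarrow> (\<And>i. i \<in> A \<Longrightarrow> d (f i) = 0) \<Longrightarrow> d (prod f A) = 0"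
  by (induction A rule: infinite_finite_induct) (auto simp: derivation_one derivation_mult)

lemma derivation_gbinomial: "is_derivation d \<Longrightarrow> d a = 0 \<Longrightarrow> d ((a::'k::field_char_0) gchoose k) = 0"
proof (cases k)
  case 0 assume "is_derivation d" then show ?thesis using 0 by (simp add: derivation_one)
next
  case (Suc n)
  assume D: "is_derivation d" and a: "d a = 0"
  have p: "d (prod (\<lambda>i. a - of_nat i) {0..n}) = 0"
    by (rule derivation_prod_const[OF D]) (simp add: derivation_diff[OF D] a derivation_of_nat[OF D])
  show ?thesis unfolding Suc gbinomial_Suc
  proof -
    have f0: "d (fact (Suc n)) = 0" using derivation_of_nat[OF D, of "fact (Suc n)"] unfolding of_nat_fact .
    show "d (prod (\<lambda>i. a - of_nat i) {0..n} div fact (Suc n)) = 0"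
      by (simp only: derivation_divide[OF D] p f0) simp
  qed
qed

section \<open>Finitely supported sums\<close>

lemma Sum_any_eq_sum_superset: "(\<And>x. g x \<noteq> 0 \<Longrightarrow> x \<in> X) \<Longrightarrow> finite X \<Longrightarrow> Sum_any g = sum g X"
  by (rule Sum_any.expand_superset) auto

lemma Sum_any_nested:
  assumes "\<And>a b. g a b \<noteq> (0::'a::comm_monoid_add) \<Longrightarrow> a \<in> X \<and> b \<in> Y" "finite X" "finite Y"
  shows "Sum_any (\<lambda>a. Sum_any (g a)) = Sum_any (\<lambda>(a, b). g a b)"
  by (rule Sum_any.cartesian_product[of "X \<times> Y"]) (use assms in blast)+

lemma Sum_any_reindex_on:
  assumes "\<And>x. g x \<noteq> (0::'a::comm_monoid_add) \<Longrightarrow> x \<in> X" "\<And>y. h y \<noteq> 0 \<Longrightarrow> y \<in> l ` X"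
    "inj_on l X" "\<And>x. x \<in> X \<Longrightarrow> h (l x) = g x" "finite X"
  shows "Sum_any g = Sum_any h"
proof -
  have "Sum_any g = sum g X" by (rule Sum_any_eq_sum_superset) (use assms in auto)
  also have "\<dots> = sum (h \<circ> l) X" using assms(4) by simp
  also have "\<dots> = sum h (l ` X)" using sum.reindex[OF assms(3), of h] by simp
  also have "\<dots> = Sum_any h" by (rule Sum_any_eq_sum_superset[symmetric]) (use assms in auto)
  finally show ?thesis .
qed

lemma Sum_any_left_distrib_superset: "(\<And>x. g x \<noteq> 0 \<Longrightarrow> x \<in> X) \<Longrightarrow> finite X \<Longrightarrow> Sum_any g * (r::'a::semiring_0) = Sum_any (\<lambda>x. g x * r)"
  by (rule Sum_any_left_distrib) (auto intro: finite_subset)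

lemma Sum_any_right_distrib_superset: "(\<And>x. g x \<noteq> 0 \<Longrightarrow> x \<in> X) \<Longrightarrow> finite X \<Longrightarrow> (r::'a::semiring_0) * Sum_any g = Sum_any (\<lambda>x. r * g x)"
  by (rule Sum_any_right_distrib) (auto intro: finite_subset)

lemma Sum_any_mult_both_sides:
  assumes "\<And>x. g x \<noteq> 0 \<Longrightarrow> x \<in> X" "finite X"
  shows "(c::'a::comm_semiring_0) * Sum_any g * d = Sum_any (\<lambda>x. c * g x * d)"
proof -
  have "c * Sum_any g = Sum_any (\<lambda>x. c * g x)" by (rule Sum_any_right_distrib_superset[OF assms])
  moreover have "Sum_any (\<lambda>x. c * g x) * d = Sum_any (\<lambda>x. c * g x * d)"
    by (rule Sum_any_left_distrib_superset[where X=X]) (use assms in \<open>auto simp: mult_zero_right\<close>, metis assms(1) mult_zero_right)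
  ultimately show ?thesis by simp
qed

lemma gbinomial_mult_gbinomial_Vandermonde:
  "(of_int (m + n - int i) gchoose \<beta> :: 'k::field_char_0) * (of_int m gchoose i)
     = (\<Sum>b\<le>\<beta>. (of_int m gchoose (i + b)) * of_nat ((i + b) choose i) * (of_int n gchoose (\<beta> - b)))"
proof -
  have "(\<Sum>b\<le>\<beta>. (of_int m gchoose (i + b)) * of_nat ((i + b) choose i) * (of_int n gchoose (\<beta> - b)))
      = (\<Sum>b\<le>\<beta>. (of_int m gchoose i) * ((of_int m - of_nat i :: 'k) gchoose b) * (of_int n gchoose (\<beta> - b)))"
  proof (rule sum.cong)
    fix b
    have "(of_int m gchoose (i + b) :: 'k) * (of_nat (i + b) gchoose i) = (of_int m gchoose i) * (of_int m - of_nat i gchoose (i + b - i))"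
      by (rule gbinomial_trinomial_revision) simp
    then show "(of_int m gchoose (i + b)) * of_nat ((i + b) choose i) * (of_int n gchoose (\<beta> - b))
      = (of_int m gchoose i) * ((of_int m - of_nat i :: 'k) gchoose b) * (of_int n gchoose (\<beta> - b))"
      by (simp add: binomial_gbinomial)
  qed simp
  also have "\<dots> = (of_int m gchoose i) * (\<Sum>b\<in>{0..\<beta>}. ((of_int m - of_nat i :: 'k) gchoose b) * (of_int n gchoose (\<beta> - b)))"
    by (simp add: sum_distrib_left mult.assoc atLeast0AtMost)
  also have "\<dots> = (of_int m gchoose i) * ((of_int m - of_nat i + of_int n) gchoose \<beta>)"
    by (simp only: gbinomial_Vandermonde)
  finally show ?thesis by (simp add: algebra_simps)
qed

section \<open>The algebra of differential functions\<close>

locale diff_algebra =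
  fixes S :: "('k::field_char_0) dfa"
  assumes diff_alg: "diff_alg S"
begin

lemma pd_derivation: "is_derivation (pd S n)"
  and px_derivation: "is_derivation (px S)"
  and pd_uu: "pd S n (uu S m) = (if n = m then 1 else 0)"
  and pd_commute_V: "f \<in> V S \<Longrightarrow> pd S n (pd S m f) = pd S m (pd S n f)"
  and pd_px_commute_V: "f \<in> V S \<Longrightarrow> pd S n (px S f) = px S (pd S n f)"
  and finite_pd_support_V: "f \<in> V S \<Longrightarrow> finite {n. pd S n f \<noteq> 0}"
  and fraction: "\<exists>a\<in>V S. \<exists>b\<in>V S. b \<noteq> 0 \<and> x = a / b"
  using diff_alg unfolding diff_alg_def by auto

lemma finite_pd_support: "finite {n. pd S n x \<noteq> 0}"
proof -
  obtain a b where ab: "a \<in> V S" "b \<in> V S" "x = a / b" using fraction by blast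
  have "{n. pd S n x \<noteq> 0} \<subseteq> {n. pd S n a \<noteq> 0} \<union> {n. pd S n b \<noteq> 0}"
    using ab by (auto simp: derivation_divide[OF pd_derivation])
  then show ?thesis using finite_pd_support_V[OF ab(1)] finite_pd_support_V[OF ab(2)] by (meson finite_UnI finite_subset)
qed

lemma tot_eq_sum_superset:
  assumes "finite T" "{n. pd S n f \<noteq> 0} \<subseteq> T"
  shows "tot S f = (\<Sum>n\<in>T. uu S (Suc n) * pd S n f) + px S f"
  unfolding tot_def using assms by (intro arg_cong2[where f="(+)"] sum.mono_neutral_left) auto

lemma tot_derivation: "is_derivation (tot S)"
  unfolding is_derivation_def
proof (intro conjI allI)
  fix a b
  let ?T = "{n. pd S n a \<noteq> 0} \<union> {n. pd S n b \<noteq> 0}"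
  have fT: "finite ?T" using finite_pd_support by simp
  have s1: "{n. pd S n (a + b) \<noteq> 0} \<subseteq> ?T" by (auto simp: derivation_add[OF pd_derivation])
  have s2: "{n. pd S n (a * b) \<noteq> 0} \<subseteq> ?T" by (auto simp: derivation_mult[OF pd_derivation])
  show "tot S (a + b) = tot S a + tot S b"
    using tot_eq_sum_superset[OF fT s1] tot_eq_sum_superset[OF fT, of a] tot_eq_sum_superset[OF fT, of b]
    by (simp add: derivation_add[OF pd_derivation] derivation_add[OF px_derivation] distrib_left sum.distrib)
  show "tot S (a * b) = tot S a * b + a * tot S b"
    using tot_eq_sum_superset[OF fT s2] tot_eq_sum_superset[OF fT, of a] tot_eq_sum_superset[OF fT, of b]
    by (simp add: derivation_mult[OF pd_derivation] derivation_mult[OF px_derivation] distrib_left sum.distrib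
        sum_distrib_left sum_distrib_right algebra_simps)
qed

lemma pd_tot_commute_V:
  assumes fV: "f \<in> V S"
  shows "pd S n (tot S f) - tot S (pd S n f) = (if n = 0 then 0 else pd S (n - 1) f)"
proof -
  let ?T = "{m. pd S m f \<noteq> 0} \<union> {m. pd S m (pd S n f) \<noteq> 0} \<union> {n - 1}"
  have fT: "finite ?T" using finite_pd_support by simp
  have e1: "tot S f = (\<Sum>m\<in>?T. uu S (Suc m) * pd S m f) + px S f"
    by (rule tot_eq_sum_superset[OF fT]) auto
  have e2: "tot S (pd S n f) = (\<Sum>m\<in>?T. uu S (Suc m) * pd S m (pd S n f)) + px S (pd S n f)"
    by (rule tot_eq_sum_superset[OF fT]) auto
  have "pd S n (tot S f) = (\<Sum>m\<in>?T. pd S n (uu S (Suc m)) * pd S m f + uu S (Suc m) * pd S n (pd S m f)) + pd S n (px S f)"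
    unfolding e1 by (simp add: derivation_add[OF pd_derivation] derivation_sum[OF pd_derivation] derivation_mult[OF pd_derivation])
  also have "\<dots> = (\<Sum>m\<in>?T. pd S n (uu S (Suc m)) * pd S m f) + tot S (pd S n f)"
    unfolding e2 by (simp add: sum.distrib pd_commute_V[OF fV] pd_px_commute_V[OF fV])
  also have "(\<Sum>m\<in>?T. pd S n (uu S (Suc m)) * pd S m f) = (if n = 0 then 0 else pd S (n - 1) f)"
  proof (cases n)
    case 0 then show ?thesis by (simp add: pd_uu)
  next
    case (Suc k)
    have "(\<Sum>m\<in>?T. pd S n (uu S (Suc m)) * pd S m f) = (\<Sum>m\<in>?T. if m = k then pd S m f else 0)"
      by (rule sum.cong) (auto simp: pd_uu Suc)
    also have "\<dots> = pd S k f" using fT by (simp add: Suc)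
    finally show ?thesis by (simp add: Suc)
  qed
  finally show ?thesis by simp
qed

lemma pd_tot_commute:
  "pd S n (tot S f) = tot S (pd S n f) + (if n = 0 then 0 else pd S (n - 1) f)"
proof -
  have D1: "is_derivation (\<lambda>f. pd S n (tot S f) - tot S (pd S n f))"
    by (rule derivation_commutator[OF pd_derivation tot_derivation])
  have D2: "is_derivation (\<lambda>f. if n = 0 then 0 else pd S (n - 1) f)"
    by (cases "n = 0") (simp_all add: is_derivation_zero pd_derivation)
  have "(\<lambda>f. pd S n (tot S f) - tot S (pd S n f)) f = (\<lambda>f. if n = 0 then 0 else pd S (n - 1) f) f"
    by (rule derivation_eq_on_fractions[OF D1 D2 fraction]) (simp add: pd_tot_commute_V)
  then show ?thesis by (simp add: algebra_simps)
qed

lemma Dfr_tot: "Dfr S (tot S f) j = tot S (Dfr S f j) + Dfr S f (j - 1)"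
  by (auto simp: Dfr_def pd_tot_commute derivation_zero[OF tot_derivation] nat_diff_distrib)

lemma pd_const:
  assumes c: "c \<in> constsV S" shows "pd S n c = 0"
proof (rule ccontr)
  assume "pd S n c \<noteq> 0"
  then have ne: "{m. pd S m c \<noteq> 0} \<noteq> {}" by blast
  define N where "N = Max {m. pd S m c \<noteq> 0}"
  have N: "pd S N c \<noteq> 0" using Max_in[OF finite_pd_support ne] N_def by simp
  have "pd S (Suc N) c = 0"
  proof (rule ccontr)
    assume "pd S (Suc N) c \<noteq> 0"
    then have "Suc N \<le> N" unfolding N_def using finite_pd_support by (intro Max_ge) auto
    then show False by simp
  qed
  moreover have "tot S c = 0" using c by (simp add: constsV_def)
  ultimately have "pd S (Suc N) 0 = tot S 0 + pd S N c" using pd_tot_commute[of "Suc N" c] by simp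
  then show False using N by (simp add: derivation_zero[OF pd_derivation] derivation_zero[OF tot_derivation])
qed

lemma tot_const: "c \<in> constsV S \<Longrightarrow> tot S c = 0"
  by (simp add: constsV_def)

lemma ders_0 [simp]: "ders S 0 f = f" by (simp add: ders_def)

lemma ders_Suc: "ders S (Suc k) f = tot S (ders S k f)" by (simp add: ders_def)

lemma ders_ders: "ders S k (ders S l f) = ders S (k + l) f" by (simp add: ders_def funpow_add)

lemma ders_add: "ders S k (a + b) = ders S k a + ders S k b"
  by (induction k) (simp_all add: ders_Suc derivation_add[OF tot_derivation])

lemma ders_zero [simp]: "ders S k 0 = 0"
  by (induction k) (simp_all add: ders_Suc derivation_zero[OF tot_derivation])

lemma ders_uminus: "ders S k (- a) = - ders S k a"
  by (induction k) (simp_all add: ders_Suc derivation_uminus[OF tot_derivation])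

lemma ders_diff: "ders S k (a - b) = ders S k a - ders S k b"
  using ders_add[of k a "-b"] ders_uminus[of k b] by simp

lemma ders_sum: "ders S k (sum f A) = (\<Sum>x\<in>A. ders S k (f x))"
  by (induction A rule: infinite_finite_induct) (auto simp: ders_add)

lemma ders_const_mult: "c \<in> constsV S \<Longrightarrow> ders S k (c * a) = c * ders S k a"
  by (induction k) (auto simp: ders_Suc derivation_mult[OF tot_derivation] tot_const)

lemma ders_leibniz:
  "ders S k (a * b) = (\<Sum>i\<le>k. of_nat (k choose i) * ders S i a * ders S (k - i) b)"
proof (induction k)
  case 0 then show ?case by simp
next
  case (Suc k)
  have "ders S (Suc k) (a * b) = (\<Sum>i\<le>k. of_nat (k choose i) * (ders S (Suc i) a * ders S (k - i) b
        + ders S i a * ders S (Suc (k - i)) b))"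
    by (simp add: ders_Suc Suc derivation_sum[OF tot_derivation] derivation_mult[OF tot_derivation] derivation_of_nat[OF tot_derivation] algebra_simps)
  also have "\<dots> = (\<Sum>i\<le>k. of_nat (k choose i) * ders S (Suc i) a * ders S (k - i) b)
        + (\<Sum>i\<le>k. of_nat (k choose i) * ders S i a * ders S (Suc k - i) b)"
    by (simp add: sum.distrib algebra_simps Suc_diff_le)
  also have "(\<Sum>i\<le>k. of_nat (k choose i) * ders S (Suc i) a * ders S (k - i) b)
      = (\<Sum>i\<le>Suc k. of_nat (k choose (i - 1)) * (if i = 0 then 0 else 1) * ders S i a * ders S (Suc k - i) b)"
    by (subst sum.atMost_Suc_shift) simp
  also have "(\<Sum>i\<le>k. of_nat (k choose i) * ders S i a * ders S (Suc k - i) b)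
      = (\<Sum>i\<le>Suc k. of_nat (k choose i) * ders S i a * ders S (Suc k - i) b)"
    by simp
  finally have "ders S (Suc k) (a * b) = (\<Sum>i\<le>Suc k. (of_nat (k choose (i - 1)) * (if i = 0 then 0 else 1)
      + of_nat (k choose i)) * ders S i a * ders S (Suc k - i) b)"
    by (simp add: sum.distrib algebra_simps)
  also have "\<dots> = (\<Sum>i\<le>Suc k. of_nat (Suc k choose i) * ders S i a * ders S (Suc k - i) b)"
  proof (rule sum.cong)
    fix i assume "i \<in> {..Suc k}"
    show "(of_nat (k choose (i - 1)) * (if i = 0 then 0 else 1) + of_nat (k choose i)) * ders S i a * ders S (Suc k - i) b
      = of_nat (Suc k choose i) * ders S i a * ders S (Suc k - i) b"
      by (cases i) (simp_all add: algebra_simps)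
  qed simp
  finally show ?case .
qed

lemma Xf_eq_sum_superset:
  assumes "finite T" "{n. pd S n g \<noteq> 0} \<subseteq> T"
  shows "Xf S G g = (\<Sum>n\<in>T. ders S n G * pd S n g)"
  unfolding Xf_def using assms by (intro sum.mono_neutral_left) auto

lemma Xf_derivation: "is_derivation (Xf S G)"
  unfolding is_derivation_def
proof (intro conjI allI)
  fix a b
  let ?T = "{n. pd S n a \<noteq> 0} \<union> {n. pd S n b \<noteq> 0}"
  have fT: "finite ?T" using finite_pd_support by simp
  have s1: "{n. pd S n (a + b) \<noteq> 0} \<subseteq> ?T" by (auto simp: derivation_add[OF pd_derivation])
  have s2: "{n. pd S n (a * b) \<noteq> 0} \<subseteq> ?T" by (auto simp: derivation_mult[OF pd_derivation])
  show "Xf S G (a + b) = Xf S G a + Xf S G b"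
    using Xf_eq_sum_superset[OF fT s1] Xf_eq_sum_superset[OF fT, of a] Xf_eq_sum_superset[OF fT, of b]
    by (simp add: derivation_add[OF pd_derivation] distrib_left sum.distrib)
  show "Xf S G (a * b) = Xf S G a * b + a * Xf S G b"
    using Xf_eq_sum_superset[OF fT s2] Xf_eq_sum_superset[OF fT, of a] Xf_eq_sum_superset[OF fT, of b]
    by (simp add: derivation_mult[OF pd_derivation] distrib_left sum.distrib
        sum_distrib_left sum_distrib_right algebra_simps)
qed

lemma Xf_add_field: "Xf S (G1 + G2) g = Xf S G1 g + Xf S G2 g"
  unfolding Xf_def by (simp add: ders_add sum.distrib algebra_simps)

lemma Xf_const_mult_field: "c \<in> constsV S \<Longrightarrow> Xf S (c * G) g = c * Xf S G g"
  unfolding Xf_def by (simp add: ders_const_mult sum_distrib_left mult.assoc)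

lemma Xf_const: "c \<in> constsV S \<Longrightarrow> Xf S G c = 0"
  unfolding Xf_def by (simp add: pd_const)

lemma Xf_tot_commute: "Xf S G (tot S f) = tot S (Xf S G f)"
proof -
  obtain M where M: "\<forall>n\<in>{n. pd S n f \<noteq> 0} \<union> {n. pd S n (tot S f) \<noteq> 0}. n \<le> M"
    using finite_pd_support finite_nat_set_iff_bounded_le by (metis finite_UnI)
  let ?T = "{..Suc M}"
  have s1: "{n. pd S n f \<noteq> 0} \<subseteq> ?T" and s2: "{n. pd S n (tot S f) \<noteq> 0} \<subseteq> ?T" using M by (auto simp: le_Suc_eq)
  have z: "pd S (Suc M) f = 0" using M by (meson Suc_n_not_le_n UnI1 mem_Collect_eq)
  have "Xf S G (tot S f) = (\<Sum>n\<in>?T. ders S n G * (tot S (pd S n f) + (if n = 0 then 0 else pd S (n - 1) f)))"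
    using Xf_eq_sum_superset[OF _ s2] by (simp add: pd_tot_commute)
  also have "\<dots> = (\<Sum>n\<in>?T. ders S n G * tot S (pd S n f)) + (\<Sum>n\<le>M. ders S (Suc n) G * pd S n f)"
    unfolding distrib_left sum.distrib by (subst (2) sum.atMost_Suc_shift) simp
  finally have A: "Xf S G (tot S f) = (\<Sum>n\<in>?T. ders S n G * tot S (pd S n f)) + (\<Sum>n\<le>M. ders S (Suc n) G * pd S n f)" .
  have "tot S (Xf S G f) = (\<Sum>n\<in>?T. ders S (Suc n) G * pd S n f + ders S n G * tot S (pd S n f))"
    unfolding Xf_eq_sum_superset[OF finite_atMost s1] by (simp only: derivation_sum[OF tot_derivation] derivation_mult[OF tot_derivation] ders_Suc)
  also have "\<dots> = (\<Sum>n\<in>?T. ders S n G * tot S (pd S n f)) + (\<Sum>n\<le>M. ders S (Suc n) G * pd S n f)"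
    by (simp add: sum.distrib z)
  finally show ?thesis using A by simp
qed

lemma Xf_ders: "Xf S G (ders S k f) = ders S k (Xf S G f)"
  by (induction k) (simp_all add: ders_Suc Xf_tot_commute)

lemma ders_gbinomial_mult: "ders S k ((of_int z gchoose i) * a) = (of_int z gchoose i) * ders S k a"
  by (induction k) (auto simp: ders_Suc derivation_mult[OF tot_derivation] derivation_of_int[OF tot_derivation] derivation_gbinomial[OF tot_derivation])

lemma ders_Sum_any: "(\<And>x. g x \<noteq> 0 \<Longrightarrow> x \<in> X) \<Longrightarrow> finite X \<Longrightarrow> ders S k (Sum_any g) = Sum_any (\<lambda>x. ders S k (g x))"
  by (subst (1 2) Sum_any_eq_sum_superset[where X=X]) (auto simp: ders_sum, metis ders_zero)

lemma ders_one: "ders S k 1 = (if k = 0 then 1 else 0)"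
  by (induction k) (auto simp: ders_Suc derivation_one[OF tot_derivation] derivation_zero[OF tot_derivation])

end

section \<open>The ring of pseudodifferential operators\<close>

definition vanishes_above :: "('k::zero) op \<Rightarrow> int \<Rightarrow> bool" where
  "vanishes_above P N \<longleftrightarrow> (\<forall>j>N. P j = 0)"

lemma vanishes_aboveD: "vanishes_above P N \<Longrightarrow> P j \<noteq> 0 \<Longrightarrow> j \<le> N"
  unfolding vanishes_above_def by (meson not_le)

lemma vanishes_above_mono: "vanishes_above P N \<Longrightarrow> N \<le> N' \<Longrightarrow> vanishes_above P N'"
  unfolding vanishes_above_def by auto

lemma is_pdo_iff_vanishes_above: "is_pdo P \<longleftrightarrow> (\<exists>N. vanishes_above P N)"
  by (simp add: is_pdo_def vanishes_above_def)

lemma common_vanishes_above: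
  assumes "is_pdo P" "is_pdo Q" obtains N where "vanishes_above P N" "vanishes_above Q N"
proof -
  obtain N1 N2 where "vanishes_above P N1" "vanishes_above Q N2"
    using assms by (auto simp: is_pdo_iff_vanishes_above)
  then show thesis by (intro that[of "max N1 N2"]) (auto elim: vanishes_above_mono)
qed

lemma vanishes_above_op_one: "vanishes_above op_one 0"
  unfolding vanishes_above_def op_one_def by auto

lemma is_pdo_op_one [simp]: "is_pdo op_one"
  using vanishes_above_op_one is_pdo_iff_vanishes_above by blast

lemma is_pdo_add [simp]:
  fixes P Q :: "'a::monoid_add op"
  assumes "is_pdo P" "is_pdo Q" shows "is_pdo (\<lambda>m. P m + Q m)"
proof -
  obtain N where "vanishes_above P N" "vanishes_above Q N" using assms by (rule common_vanishes_above)
  then have "vanishes_above (\<lambda>m. P m + Q m) N" unfolding vanishes_above_def by auto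
  then show ?thesis unfolding is_pdo_iff_vanishes_above by blast
qed

lemma is_pdo_diff [simp]:
  fixes P Q :: "'a::group_add op"
  assumes "is_pdo P" "is_pdo Q" shows "is_pdo (\<lambda>m. P m - Q m)"
proof -
  obtain N where "vanishes_above P N" "vanishes_above Q N" using assms by (rule common_vanishes_above)
  then have "vanishes_above (\<lambda>m. P m - Q m) N" unfolding vanishes_above_def by auto
  then show ?thesis unfolding is_pdo_iff_vanishes_above by blast
qed

lemma is_pdo_scale [simp]: "is_pdo (P :: 'a::mult_zero op) \<Longrightarrow> is_pdo (\<lambda>m. c * P m)"
  unfolding is_pdo_def by (metis mult_zero_right)

context diff_algebra
begin

definition pmul_term :: "'k op \<Rightarrow> 'k op \<Rightarrow> int \<Rightarrow> int \<Rightarrow> nat \<Rightarrow> 'k" where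
  "pmul_term P Q j m k = (of_int m gchoose k) * P m * ders S k (Q (j - m + int k))"

lemma pmul_term_support:
  assumes "vanishes_above P NP" "vanishes_above Q NQ" "P m \<noteq> 0" "Q (j - m + int k) \<noteq> 0"
  shows "(m, k) \<in> {j - NQ..NP} \<times> {..nat (NP + NQ - j)}"
  using vanishes_aboveD[OF assms(1,3)] vanishes_aboveD[OF assms(2,4)] by auto

lemma pmul_term_nonzeroD: "pmul_term P Q j m k \<noteq> 0 \<Longrightarrow> P m \<noteq> 0 \<and> Q (j - m + int k) \<noteq> 0"
  unfolding pmul_term_def by auto

lemma pmul_eq_Sum_any:
  assumes "vanishes_above P NP" "vanishes_above Q NQ"
  shows "pmul S P Q j = Sum_any (\<lambda>(m, k). pmul_term P Q j m k)"
proof -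
  let ?X = "{j - NQ..NP} \<times> {..nat (NP + NQ - j)}"
  have sub: "{(m, k). P m \<noteq> 0 \<and> Q (j - m + int k) \<noteq> 0} \<subseteq> ?X"
    using pmul_term_support[OF assms] by auto
  have "pmul S P Q j = (\<Sum>(m,k)\<in>{(m, k). P m \<noteq> 0 \<and> Q (j - m + int k) \<noteq> 0}. pmul_term P Q j m k)"
    unfolding pmul_def pmul_term_def by (simp add: case_prod_beta mult.assoc)
  also have "\<dots> = (\<Sum>(m,k)\<in>?X. pmul_term P Q j m k)"
    by (rule sum.mono_neutral_left) (use sub pmul_term_nonzeroD[of P Q j] in auto)
  also have "\<dots> = Sum_any (\<lambda>(m, k). pmul_term P Q j m k)"
  proof (rule Sum_any_eq_sum_superset[symmetric])
    fix x assume "(case x of (m, k) \<Rightarrow> pmul_term P Q j m k) \<noteq> 0"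
    then show "x \<in> ?X" by (cases x, simp only: prod.case) (blast dest: pmul_term_nonzeroD pmul_term_support[OF assms])
  qed simp
  finally show ?thesis .
qed

lemma vanishes_above_pmul:
  assumes "vanishes_above P NP" "vanishes_above Q NQ"
  shows "vanishes_above (pmul S P Q) (NP + NQ)"
  unfolding vanishes_above_def
proof (intro allI impI)
  fix j assume j: "j > NP + NQ"
  have "\<And>m k. pmul_term P Q j m k = 0"
  proof (rule ccontr)
    fix m k assume "pmul_term P Q j m k \<noteq> 0"
    then have "P m \<noteq> 0" "Q (j - m + int k) \<noteq> 0" using pmul_term_nonzeroD by auto
    then show False using vanishes_aboveD[OF assms(1)] vanishes_aboveD[OF assms(2)] j by fastforce
  qed
  then show "pmul S P Q j = 0" by (simp add: pmul_eq_Sum_any[OF assms])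
qed

lemma is_pdo_pmul [simp]: "is_pdo P \<Longrightarrow> is_pdo Q \<Longrightarrow> is_pdo (pmul S P Q)"
  using vanishes_above_pmul by (meson is_pdo_iff_vanishes_above)

lemma pmul_eq_sum_box:
  assumes "vanishes_above P NP" "vanishes_above Q NQ"
  shows "pmul S P Q j = (\<Sum>(m, k)\<in>{j - NQ..NP} \<times> {..nat (NP + NQ - j)}. pmul_term P Q j m k)"
  unfolding pmul_eq_Sum_any[OF assms]
proof (rule Sum_any_eq_sum_superset)
  fix x assume "(case x of (m, k) \<Rightarrow> pmul_term P Q j m k) \<noteq> 0"
  then show "x \<in> {j - NQ..NP} \<times> {..nat (NP + NQ - j)}"
    by (cases x, simp only: prod.case) (blast dest: pmul_term_nonzeroD pmul_term_support[OF assms])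
qed simp

lemma pmul_zero_left: "pmul S (\<lambda>_. 0) Q = (\<lambda>_. 0)"
  unfolding pmul_def by (rule ext) simp

lemma pmul_zero_right: "pmul S P (\<lambda>_. 0) = (\<lambda>_. 0)"
  unfolding pmul_def by (rule ext) simp

lemma pmul_add_left:
  assumes "is_pdo P" "is_pdo P'" "is_pdo Q"
  shows "pmul S (\<lambda>m. P m + P' m) Q = (\<lambda>j. pmul S P Q j + pmul S P' Q j)"
proof
  fix j
  obtain N NQ where b: "vanishes_above P N" "vanishes_above P' N" "vanishes_above Q NQ"
    using assms by (metis common_vanishes_above is_pdo_iff_vanishes_above)
  have sum: "vanishes_above (\<lambda>m. P m + P' m) N" using b unfolding vanishes_above_def by auto
  show "pmul S (\<lambda>m. P m + P' m) Q j = pmul S P Q j + pmul S P' Q j"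
    unfolding pmul_eq_sum_box[OF sum b(3)] pmul_eq_sum_box[OF b(1,3)] pmul_eq_sum_box[OF b(2,3)]
    by (simp add: pmul_term_def sum.distrib[symmetric] case_prod_beta algebra_simps)
qed

lemma pmul_add_right:
  assumes "is_pdo P" "is_pdo Q" "is_pdo Q'"
  shows "pmul S P (\<lambda>m. Q m + Q' m) = (\<lambda>j. pmul S P Q j + pmul S P Q' j)"
proof
  fix j
  obtain N NP where b: "vanishes_above P NP" "vanishes_above Q N" "vanishes_above Q' N"
    using assms by (metis common_vanishes_above is_pdo_iff_vanishes_above)
  have sum: "vanishes_above (\<lambda>m. Q m + Q' m) N" using b unfolding vanishes_above_def by auto
  show "pmul S P (\<lambda>m. Q m + Q' m) j = pmul S P Q j + pmul S P Q' j"
    unfolding pmul_eq_sum_box[OF b(1) sum] pmul_eq_sum_box[OF b(1,2)] pmul_eq_sum_box[OF b(1,3)]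
    by (simp add: pmul_term_def sum.distrib[symmetric] case_prod_beta algebra_simps ders_add)
qed

lemma pmul_diff_left:
  assumes "is_pdo P" "is_pdo P'" "is_pdo Q"
  shows "pmul S (\<lambda>m. P m - P' m) Q = (\<lambda>j. pmul S P Q j - pmul S P' Q j)"
proof
  fix j
  obtain N NQ where b: "vanishes_above P N" "vanishes_above P' N" "vanishes_above Q NQ"
    using assms by (metis common_vanishes_above is_pdo_iff_vanishes_above)
  have sum: "vanishes_above (\<lambda>m. P m - P' m) N" using b unfolding vanishes_above_def by auto
  show "pmul S (\<lambda>m. P m - P' m) Q j = pmul S P Q j - pmul S P' Q j"
    unfolding pmul_eq_sum_box[OF sum b(3)] pmul_eq_sum_box[OF b(1,3)] pmul_eq_sum_box[OF b(2,3)]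
    by (simp add: pmul_term_def sum_subtractf[symmetric] case_prod_beta algebra_simps)
qed

lemma pmul_diff_right:
  assumes "is_pdo P" "is_pdo Q" "is_pdo Q'"
  shows "pmul S P (\<lambda>m. Q m - Q' m) = (\<lambda>j. pmul S P Q j - pmul S P Q' j)"
proof
  fix j
  obtain N NP where b: "vanishes_above P NP" "vanishes_above Q N" "vanishes_above Q' N"
    using assms by (metis common_vanishes_above is_pdo_iff_vanishes_above)
  have sum: "vanishes_above (\<lambda>m. Q m - Q' m) N" using b unfolding vanishes_above_def by auto
  show "pmul S P (\<lambda>m. Q m - Q' m) j = pmul S P Q j - pmul S P Q' j"
    unfolding pmul_eq_sum_box[OF b(1) sum] pmul_eq_sum_box[OF b(1,2)] pmul_eq_sum_box[OF b(1,3)]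
    by (simp add: pmul_term_def sum_subtractf[symmetric] case_prod_beta algebra_simps ders_diff)
qed

lemma pmul_scale_left:
  assumes "is_pdo P" "is_pdo Q"
  shows "pmul S (\<lambda>m. c * P m) Q = (\<lambda>j. c * pmul S P Q j)"
proof
  fix j
  obtain NP NQ where b: "vanishes_above P NP" "vanishes_above Q NQ"
    using assms by (auto simp: is_pdo_iff_vanishes_above)
  have sum: "vanishes_above (\<lambda>m. c * P m) NP" using b unfolding vanishes_above_def by auto
  show "pmul S (\<lambda>m. c * P m) Q j = c * pmul S P Q j"
    unfolding pmul_eq_sum_box[OF sum b(2)] pmul_eq_sum_box[OF b]
    by (simp add: pmul_term_def sum_distrib_left case_prod_beta algebra_simps)
qed

lemma pmul_const_right:
  assumes "c \<in> constsV S" "is_pdo P" "is_pdo Q"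
  shows "pmul S P (\<lambda>m. c * Q m) = (\<lambda>j. c * pmul S P Q j)"
proof
  fix j
  obtain NP NQ where b: "vanishes_above P NP" "vanishes_above Q NQ"
    using assms by (auto simp: is_pdo_iff_vanishes_above)
  have sum: "vanishes_above (\<lambda>m. c * Q m) NQ" using b unfolding vanishes_above_def by auto
  show "pmul S P (\<lambda>m. c * Q m) j = c * pmul S P Q j"
    unfolding pmul_eq_sum_box[OF b(1) sum] pmul_eq_sum_box[OF b]
    by (simp add: pmul_term_def sum_distrib_left case_prod_beta algebra_simps ders_const_mult[OF assms(1)])
qed

lemma pmul_uminus_right:
  assumes "is_pdo P" "is_pdo Q"
  shows "pmul S P (\<lambda>m. - Q m) = (\<lambda>j. - pmul S P Q j)"
  using pmul_diff_right[of P "\<lambda>_. 0" Q] assms by (simp add: pmul_zero_right is_pdo_def)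

lemma pmul_one_left:
  assumes "is_pdo P" shows "pmul S op_one P = P"
proof
  fix j
  obtain N where b: "vanishes_above P N" using assms by (auto simp: is_pdo_iff_vanishes_above)
  have "pmul S op_one P j = Sum_any (\<lambda>(m, k). pmul_term op_one P j m k)" by (rule pmul_eq_Sum_any[OF vanishes_above_op_one b])
  also have "\<dots> = (\<Sum>(m, k)\<in>{(0, 0)}. pmul_term op_one P j m k)"
    by (rule Sum_any_eq_sum_superset) (auto simp: pmul_term_def op_one_def gbinomial_0_left split: if_splits)
  also have "\<dots> = P j" by (simp add: pmul_term_def op_one_def)
  finally show "pmul S op_one P j = P j" .
qed

lemma pmul_one_right:
  assumes "is_pdo P" shows "pmul S P op_one = P"
proof
  fix j
  obtain N where b: "vanishes_above P N" using assms by (auto simp: is_pdo_iff_vanishes_above)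
  have "pmul S P op_one j = Sum_any (\<lambda>(m, k). pmul_term P op_one j m k)" by (rule pmul_eq_Sum_any[OF b vanishes_above_op_one])
  also have "\<dots> = (\<Sum>(m, k)\<in>{(j, 0)}. pmul_term P op_one j m k)"
    by (rule Sum_any_eq_sum_superset) (auto simp: pmul_term_def op_one_def ders_one split: if_splits)
  also have "\<dots> = P j" by (simp add: pmul_term_def op_one_def)
  finally show "pmul S P op_one j = P j" .
qed

definition assoc_lhs_term :: "'k op \<Rightarrow> 'k op \<Rightarrow> 'k op \<Rightarrow> int \<Rightarrow> int \<times> nat \<times> int \<times> nat \<Rightarrow> 'k" where
  "assoc_lhs_term P Q R j = (\<lambda>(m, i, n, k). (of_int (m + n - int i) gchoose k) * (of_int m gchoose i) * P m
      * ders S i (Q n) * ders S k (R (j - m - n + int i + int k)))"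

lemma pmul_pmul_left_eq_Sum_any:
  assumes P: "vanishes_above P NP" and Q: "vanishes_above Q NQ" and R: "vanishes_above R NR"
  shows "pmul S (pmul S P Q) R j = Sum_any (assoc_lhs_term P Q R j)"
proof -
  define K where "K = nat (NR - j + NP + NQ)"
  let ?X = "{j - NR..NP + NQ} \<times> {..K}" and ?Y = "{j - NR - NQ..NP} \<times> {..K}"
  define h where "h = (\<lambda>(s::int, k::nat) (m::int, i::nat). (of_int s gchoose k) * pmul_term P Q s m i * ders S k (R (j - s + int k)))"
  have PQ: "vanishes_above (pmul S P Q) (NP + NQ)" by (rule vanishes_above_pmul[OF P Q])
  have h_support: "x \<in> ?X \<and> y \<in> ?Y" if "h x y \<noteq> 0" for x y
  proof -
    obtain s k m i where xy: "x = (s, k)" "y = (m, i)" by (cases x, cases y) auto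
    have "P m \<noteq> 0" "Q (s - m + int i) \<noteq> 0" "R (j - s + int k) \<noteq> 0"
      using that unfolding h_def xy pmul_term_def by auto
    then have "m \<le> NP" "s - m + int i \<le> NQ" "j - s + int k \<le> NR"
      using vanishes_aboveD[OF P] vanishes_aboveD[OF Q] vanishes_aboveD[OF R] by auto
    then show ?thesis unfolding xy K_def by auto
  qed
  have "pmul S (pmul S P Q) R j = Sum_any (\<lambda>(s, k). pmul_term (pmul S P Q) R j s k)"
    by (rule pmul_eq_Sum_any[OF PQ R])
  also have "\<dots> = Sum_any (\<lambda>x. Sum_any (h x))"
  proof (rule Sum_any.cong)
    fix x :: "int \<times> nat"
    obtain s k where x: "x = (s, k)" by (cases x)
    have "pmul_term (pmul S P Q) R j s k = (of_int s gchoose k) * Sum_any (\<lambda>(m, i). pmul_term P Q s m i) * ders S k (R (j - s + int k))"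
      unfolding pmul_term_def pmul_eq_Sum_any[OF P Q] by simp
    also have "\<dots> = Sum_any (h (s, k))"
    proof -
      have f: "(case y of (m, i) \<Rightarrow> pmul_term P Q s m i) \<noteq> 0 \<Longrightarrow> y \<in> {s - NQ..NP} \<times> {..nat (NP + NQ - s)}" for y
        by (cases y, simp only: prod.case) (blast dest: pmul_term_nonzeroD pmul_term_support[OF P Q])
      show ?thesis
        unfolding h_def by (rule trans[OF Sum_any_mult_both_sides[OF f finite_SigmaI[OF finite_atLeastAtMost_int finite_atMost]]]) (simp, intro Sum_any.cong, auto split: prod.splits)
    qed
    finally show "(case x of (s, k) \<Rightarrow> pmul_term (pmul S P Q) R j s k) = Sum_any (h x)" by (simp add: x)
  qed
  also have "\<dots> = Sum_any (\<lambda>(x, y). h x y)"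
    by (rule Sum_any_nested[OF h_support]) auto
  also have "\<dots> = Sum_any (assoc_lhs_term P Q R j)"
  proof (rule Sum_any.reindex_cong[where l = "\<lambda>(m, i, n, k). ((m + n - int i, k), (m, i))"])
    show "bij (\<lambda>(m::int, i::nat, n::int, k::nat). ((m + n - int i, k), (m, i)))"
      by (rule o_bij[where g = "\<lambda>((s, k), (m, i)). (m, i, s - m + int i, k)"]) auto
    show "(\<lambda>(x, y). h x y) \<circ> (\<lambda>(m, i, n, k). ((m + n - int i, k), (m, i))) = assoc_lhs_term P Q R j"
      unfolding h_def assoc_lhs_term_def pmul_term_def by (auto simp: fun_eq_iff algebra_simps)
  qed
  finally show ?thesis .
qed

text \<open>Both iterated products are rewritten to a sum of these terms: the left one by the
  Vandermonde-type identity for the binomial coefficients, the right one by the Leibniz rule.\<close>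

definition assoc_mid_term :: "'k op \<Rightarrow> 'k op \<Rightarrow> 'k op \<Rightarrow> int \<Rightarrow> (int \<times> nat \<times> int \<times> nat) \<times> nat \<Rightarrow> 'k" where
  "assoc_mid_term P Q R j = (\<lambda>((m, i, n, \<beta>), b). if b \<le> \<beta> then (of_int m gchoose (i + b)) * of_nat ((i + b) choose i)
      * (of_int n gchoose (\<beta> - b)) * P m * ders S i (Q n) * ders S \<beta> (R (j - m - n + int i + int \<beta>)) else 0)"

definition assoc_rhs_term :: "'k op \<Rightarrow> 'k op \<Rightarrow> 'k op \<Rightarrow> int \<Rightarrow> ((int \<times> nat) \<times> (int \<times> nat)) \<times> nat \<Rightarrow> 'k" where
  "assoc_rhs_term P Q R j = (\<lambda>(((m, k), (n, l)), a). if a \<le> k then (of_int m gchoose k) * P m * (of_int n gchoose l)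
      * of_nat (k choose a) * ders S a (Q n) * ders S (k - a + l) (R (j - m + int k - n + int l)) else 0)"

lemma assoc_lhs_mid:
  assumes P: "vanishes_above P NP" and Q: "vanishes_above Q NQ" and R: "vanishes_above R NR"
  shows "Sum_any (assoc_lhs_term P Q R j) = Sum_any (assoc_mid_term P Q R j)"
proof -
  define K where "K = nat (NR - j + NP + NQ)"
  let ?X = "{j - NR - NQ..NP} \<times> {..K} \<times> {j - NR - NP..NQ} \<times> {..K}"
  have "Sum_any (assoc_lhs_term P Q R j) = Sum_any (\<lambda>x. Sum_any (\<lambda>b. assoc_mid_term P Q R j (x, b)))"
  proof (rule Sum_any.cong)
    fix x :: "int \<times> nat \<times> int \<times> nat"
    obtain m i n \<beta> where x: "x = (m, i, n, \<beta>)" by (cases x) auto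
    have "Sum_any (\<lambda>b. assoc_mid_term P Q R j (x, b)) = (\<Sum>b\<le>\<beta>. assoc_mid_term P Q R j (x, b))"
      by (rule Sum_any_eq_sum_superset) (auto simp: assoc_mid_term_def x split: if_splits)
    also have "\<dots> = assoc_lhs_term P Q R j x"
    proof -
      let ?r = "P m * ders S i (Q n) * ders S \<beta> (R (j - m - n + int i + int \<beta>))"
      have "assoc_lhs_term P Q R j x = ((of_int (m + n - int i) gchoose \<beta>) * (of_int m gchoose i)) * ?r"
        by (simp add: assoc_lhs_term_def x ac_simps)
      also have "\<dots> = (\<Sum>b\<le>\<beta>. (of_int m gchoose (i + b)) * of_nat ((i + b) choose i) * (of_int n gchoose (\<beta> - b))) * ?r"
        by (simp only: gbinomial_mult_gbinomial_Vandermonde)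
      also have "\<dots> = (\<Sum>b\<le>\<beta>. assoc_mid_term P Q R j (x, b))"
        unfolding sum_distrib_right by (rule sum.cong) (auto simp: assoc_mid_term_def x ac_simps)
      finally show ?thesis by simp
    qed
    finally show "assoc_lhs_term P Q R j x = Sum_any (\<lambda>b. assoc_mid_term P Q R j (x, b))" by simp
  qed
  also have "\<dots> = Sum_any (\<lambda>(x, b). assoc_mid_term P Q R j (x, b))"
  proof (rule Sum_any_nested[where X = ?X and Y = "{..K}"])
    fix x b assume nz: "assoc_mid_term P Q R j (x, b) \<noteq> 0"
    obtain m i n \<beta> where x: "x = (m, i, n, \<beta>)" by (cases x) auto
    have "P m \<noteq> 0" "Q n \<noteq> 0" "R (j - m - n + int i + int \<beta>) \<noteq> 0" "b \<le> \<beta>"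
      using nz unfolding assoc_mid_term_def x by (auto split: if_splits)
    then have "m \<le> NP" "n \<le> NQ" "j - m - n + int i + int \<beta> \<le> NR" "b \<le> \<beta>"
      using vanishes_aboveD[OF P] vanishes_aboveD[OF Q] vanishes_aboveD[OF R] by auto
    then show "x \<in> ?X \<and> b \<in> {..K}" unfolding x K_def by auto
  qed auto
  finally show ?thesis by (simp add: case_prod_beta)
qed

lemma assoc_rhs_mid:
  assumes P: "vanishes_above P NP" and Q: "vanishes_above Q NQ" and R: "vanishes_above R NR"
  shows "Sum_any (assoc_rhs_term P Q R j) = Sum_any (assoc_mid_term P Q R j)"
proof -
  define K where "K = nat (NR - j + NP + NQ)"
  define X where "X = {((m, i, n, \<beta>), b). (m, i, n, \<beta>) \<in> {j - NR - NQ..NP} \<times> {..K} \<times> {j - NR - NP..NQ} \<times> {..K} \<and> b \<le> \<beta>}"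
  define l where "l = (\<lambda>(((m::int), (i::nat), (n::int), (\<beta>::nat)), (b::nat)). (((m, i + b), (n, \<beta> - b)), i))"
  have fX: "finite X"
    by (rule finite_subset[of _ "({j - NR - NQ..NP} \<times> {..K} \<times> {j - NR - NP..NQ} \<times> {..K}) \<times> {..K}"])
      (auto simp: X_def)
  show ?thesis
  proof (rule Sum_any_reindex_on[symmetric, where X = X and l = l])
    fix x assume nz: "assoc_mid_term P Q R j x \<noteq> 0"
    obtain m i n \<beta> b where x: "x = ((m, i, n, \<beta>), b)" by (cases x) auto
    have "P m \<noteq> 0" "Q n \<noteq> 0" "R (j - m - n + int i + int \<beta>) \<noteq> 0" "b \<le> \<beta>"
      using nz unfolding assoc_mid_term_def x by (auto split: if_splits)
    then have "m \<le> NP" "n \<le> NQ" "j - m - n + int i + int \<beta> \<le> NR" "b \<le> \<beta>"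
      using vanishes_aboveD[OF P] vanishes_aboveD[OF Q] vanishes_aboveD[OF R] by auto
    then show "x \<in> X" unfolding x K_def X_def by auto
  next
    fix y assume nz: "assoc_rhs_term P Q R j y \<noteq> 0"
    obtain m k n l' a where y: "y = (((m, k), (n, l')), a)" by (cases y) auto
    have "P m \<noteq> 0" "Q n \<noteq> 0" "R (j - m + int k - n + int l') \<noteq> 0" "a \<le> k"
      using nz unfolding assoc_rhs_term_def y by (auto split: if_splits)
    then have b: "m \<le> NP" "n \<le> NQ" "j - m + int k - n + int l' \<le> NR" "a \<le> k"
      using vanishes_aboveD[OF P] vanishes_aboveD[OF Q] vanishes_aboveD[OF R] by auto
    have "((m, a, n, k - a + l'), k - a) \<in> X" using b unfolding X_def K_def by auto
    moreover have "l ((m, a, n, k - a + l'), k - a) = y" using b unfolding l_def y by auto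
    ultimately show "y \<in> l ` X" by force
  next
    show "inj_on l X" unfolding inj_on_def l_def X_def by auto
  next
    fix x assume "x \<in> X"
    then obtain m i n \<beta> b where x: "x = ((m, i, n, \<beta>), b)" and b: "b \<le> \<beta>" unfolding X_def by auto
    have e1: "i + b - i + (\<beta> - b) = \<beta>" using b by simp
    have e2: "j - m + int (i + b) - n + int (\<beta> - b) = j - m - n + int i + int \<beta>" using b by simp
    show "assoc_rhs_term P Q R j (l x) = assoc_mid_term P Q R j x"
      unfolding assoc_rhs_term_def assoc_mid_term_def l_def x using b by (simp only: prod.case e1 e2 if_True le_add1) (simp add: ac_simps)
  qed (rule fX)
qed

lemma pmul_term_pmul_right:
  assumes Q: "vanishes_above Q NQ" and R: "vanishes_above R NR"
  shows "pmul_term P (pmul S Q R) j m k = Sum_any (\<lambda>y. Sum_any (\<lambda>a. assoc_rhs_term P Q R j (((m, k), y), a)))"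
proof -
  define s where "s = j - m + int k"
  have f: "(case y of (n, l) \<Rightarrow> pmul_term Q R s n l) \<noteq> 0 \<Longrightarrow> y \<in> {s - NR..NQ} \<times> {..nat (NQ + NR - s)}" for y
    by (cases y, simp only: prod.case) (blast dest: pmul_term_nonzeroD pmul_term_support[OF Q R])
  have fin: "finite ({s - NR..NQ} \<times> {..nat (NQ + NR - s)})" by simp
  have "pmul_term P (pmul S Q R) j m k = ((of_int m gchoose k) * P m) * ders S k (Sum_any (\<lambda>(n, l). pmul_term Q R s n l))"
    unfolding pmul_term_def pmul_eq_Sum_any[OF Q R] s_def by simp
  also have "\<dots> = ((of_int m gchoose k) * P m) * Sum_any (\<lambda>y. ders S k (case y of (n, l) \<Rightarrow> pmul_term Q R s n l))"
    using ders_Sum_any[OF f fin, where k=k] by simp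
  also have "\<dots> = Sum_any (\<lambda>y. ((of_int m gchoose k) * P m) * ders S k (case y of (n, l) \<Rightarrow> pmul_term Q R s n l))"
  proof (rule Sum_any_right_distrib_superset[where X = "{s - NR..NQ} \<times> {..nat (NQ + NR - s)}"])
    fix y assume "ders S k (case y of (n, l) \<Rightarrow> pmul_term Q R s n l) \<noteq> 0"
    then have "(case y of (n, l) \<Rightarrow> pmul_term Q R s n l) \<noteq> 0" by (metis ders_zero)
    then show "y \<in> {s - NR..NQ} \<times> {..nat (NQ + NR - s)}" by (rule f)
  qed simp
  also have "\<dots> = Sum_any (\<lambda>y. Sum_any (\<lambda>a. assoc_rhs_term P Q R j (((m, k), y), a)))"
  proof (rule Sum_any.cong)
    fix y :: "int \<times> nat"
    obtain n l' where y: "y = (n, l')" by (cases y)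
    have "ders S k (pmul_term Q R s n l') = (of_int n gchoose l') * ders S k (Q n * ders S l' (R (s - n + int l')))"
      unfolding pmul_term_def by (simp add: mult.assoc ders_gbinomial_mult)
    also have "\<dots> = (of_int n gchoose l') * (\<Sum>a\<le>k. of_nat (k choose a) * ders S a (Q n) * ders S (k - a + l') (R (s - n + int l')))"
      by (simp add: ders_leibniz ders_ders)
    finally have e: "ders S k (pmul_term Q R s n l') = \<dots>" .
    have "Sum_any (\<lambda>a. assoc_rhs_term P Q R j (((m, k), y), a)) = (\<Sum>a\<le>k. assoc_rhs_term P Q R j (((m, k), y), a))"
      by (rule Sum_any_eq_sum_superset) (auto simp: assoc_rhs_term_def y split: if_splits)
    also have "\<dots> = ((of_int m gchoose k) * P m) * ders S k (pmul_term Q R s n l')"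
      unfolding e sum_distrib_left by (rule sum.cong) (auto simp: assoc_rhs_term_def y s_def ac_simps)
    finally show "((of_int m gchoose k) * P m) * ders S k (case y of (n, l) \<Rightarrow> pmul_term Q R s n l)
        = Sum_any (\<lambda>a. assoc_rhs_term P Q R j (((m, k), y), a))" by (simp add: y)
  qed
  finally show ?thesis .
qed

lemma pmul_pmul_right_eq_Sum_any:
  assumes P: "vanishes_above P NP" and Q: "vanishes_above Q NQ" and R: "vanishes_above R NR"
  shows "pmul S P (pmul S Q R) j = Sum_any (assoc_rhs_term P Q R j)"
proof -
  define K where "K = nat (NR - j + NP + NQ)"
  let ?X = "{j - NR - NQ..NP} \<times> {..K}" and ?Y = "{j - NR - NP..NQ} \<times> {..K}"
  have QR: "vanishes_above (pmul S Q R) (NQ + NR)" by (rule vanishes_above_pmul[OF Q R])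
  have rhs_support: "x \<in> ?X \<and> y \<in> ?Y \<and> a \<in> {..K}" if nz: "assoc_rhs_term P Q R j ((x, y), a) \<noteq> 0" for x y a
  proof -
    obtain m k n l' where xy: "x = (m, k)" "y = (n, l')" by (cases x, cases y) auto
    have "P m \<noteq> 0" "Q n \<noteq> 0" "R (j - m + int k - n + int l') \<noteq> 0" "a \<le> k"
      using nz unfolding assoc_rhs_term_def xy by (auto split: if_splits)
    then have b: "m \<le> NP" "n \<le> NQ" "j - m + int k - n + int l' \<le> NR" "a \<le> k"
      using vanishes_aboveD[OF P] vanishes_aboveD[OF Q] vanishes_aboveD[OF R] by auto
    then show ?thesis unfolding xy K_def by auto
  qed
  have "pmul S P (pmul S Q R) j = Sum_any (\<lambda>(m, k). pmul_term P (pmul S Q R) j m k)"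
    by (rule pmul_eq_Sum_any[OF P QR])
  also have "\<dots> = Sum_any (\<lambda>x. Sum_any (\<lambda>y. Sum_any (\<lambda>a. assoc_rhs_term P Q R j ((x, y), a))))"
    by (rule Sum_any.cong) (auto simp: pmul_term_pmul_right[OF Q R])
  also have "\<dots> = Sum_any (\<lambda>(x, y). Sum_any (\<lambda>a. assoc_rhs_term P Q R j ((x, y), a)))"
  proof (rule Sum_any_nested[where X = ?X and Y = ?Y])
    fix x y assume "Sum_any (\<lambda>a. assoc_rhs_term P Q R j ((x, y), a)) \<noteq> 0"
    then obtain a where "assoc_rhs_term P Q R j ((x, y), a) \<noteq> 0" by (rule Sum_any.not_neutral_obtains_not_neutral)
    then show "x \<in> ?X \<and> y \<in> ?Y" using rhs_support by blast
  qed auto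
  also have "\<dots> = Sum_any (\<lambda>xy. Sum_any (\<lambda>a. assoc_rhs_term P Q R j (xy, a)))"
    by (simp add: case_prod_beta)
  also have "\<dots> = Sum_any (\<lambda>(xy, a). assoc_rhs_term P Q R j (xy, a))"
  proof (rule Sum_any_nested[where X = "?X \<times> ?Y" and Y = "{..K}"])
    fix xy a assume "assoc_rhs_term P Q R j (xy, a) \<noteq> 0"
    then show "xy \<in> ?X \<times> ?Y \<and> a \<in> {..K}" using rhs_support by (cases xy) blast
  qed auto
  finally show ?thesis by (simp add: case_prod_beta)
qed

lemma pmul_assoc:
  assumes "is_pdo P" "is_pdo Q" "is_pdo R"
  shows "pmul S (pmul S P Q) R = pmul S P (pmul S Q R)"
proof
  fix j
  obtain NP NQ NR where b: "vanishes_above P NP" "vanishes_above Q NQ" "vanishes_above R NR" using assms by (auto simp: is_pdo_iff_vanishes_above)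
  show "pmul S (pmul S P Q) R j = pmul S P (pmul S Q R) j"
    using pmul_pmul_left_eq_Sum_any[OF b] assoc_lhs_mid[OF b] assoc_rhs_mid[OF b] pmul_pmul_right_eq_Sum_any[OF b] by simp
qed

lemma vanishes_above_Xop: "vanishes_above P N \<Longrightarrow> vanishes_above (Xop S G P) N"
  unfolding vanishes_above_def Xop_def by (simp add: derivation_zero[OF Xf_derivation])

lemma is_pdo_Xop [simp]: "is_pdo P \<Longrightarrow> is_pdo (Xop S G P)"
  using vanishes_above_Xop is_pdo_iff_vanishes_above by blast

lemma Xf_pmul_term:
  "Xf S G (pmul_term P Q j m k) = pmul_term (Xop S G P) Q j m k + pmul_term P (Xop S G Q) j m k"
proof -
  have "Xf S G (of_int m gchoose k) = 0"
    by (rule derivation_gbinomial[OF Xf_derivation derivation_of_int[OF Xf_derivation]])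
  then show ?thesis unfolding pmul_term_def Xop_def
    by (simp add: derivation_mult[OF Xf_derivation] Xf_ders algebra_simps)
qed

lemma Xop_pmul:
  assumes "is_pdo P" "is_pdo Q"
  shows "Xop S G (pmul S P Q) = (\<lambda>j. pmul S (Xop S G P) Q j + pmul S P (Xop S G Q) j)"
proof
  fix j
  obtain NP NQ where b: "vanishes_above P NP" "vanishes_above Q NQ"
    using assms by (auto simp: is_pdo_iff_vanishes_above)
  show "Xop S G (pmul S P Q) j = pmul S (Xop S G P) Q j + pmul S P (Xop S G Q) j"
    unfolding Xop_def[of S G "pmul S P Q"] pmul_eq_sum_box[OF b]
      pmul_eq_sum_box[OF vanishes_above_Xop[OF b(1)] b(2)] pmul_eq_sum_box[OF b(1) vanishes_above_Xop[OF b(2)]]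
    by (simp add: derivation_sum[OF Xf_derivation] case_prod_beta Xf_pmul_term sum.distrib)
qed

lemma exists_leading_index:
  assumes "vanishes_above P N" "P \<noteq> (\<lambda>_. 0)"
  shows "\<exists>d. P d \<noteq> 0 \<and> vanishes_above P d"
proof -
  obtain j0 where j0: "P j0 \<noteq> 0" using assms(2) by auto
  let ?A = "{j. P j \<noteq> 0 \<and> j0 \<le> j}"
  have fin: "finite ?A" by (rule finite_subset[of _ "{j0..N}"]) (auto dest: vanishes_aboveD[OF assms(1)])
  have ne: "j0 \<in> ?A" using j0 by simp
  define d where "d = Max ?A"
  have "d \<in> ?A" unfolding d_def using fin ne by (intro Max_in) auto
  moreover have "vanishes_above P d" unfolding vanishes_above_def
  proof (intro allI impI, rule ccontr)
    fix j assume "d < j" "P j \<noteq> 0"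
    then have "j \<in> ?A" using \<open>d \<in> ?A\<close> by auto
    then have "j \<le> d" unfolding d_def using fin by simp
    then show False using \<open>d < j\<close> by simp
  qed
  ultimately show ?thesis by auto
qed

lemma pmul_leading:
  assumes "vanishes_above P dP" "vanishes_above Q dQ"
  shows "pmul S P Q (dP + dQ) = P dP * Q dQ"
  unfolding pmul_eq_sum_box[OF assms] by (simp add: pmul_term_def)

lemma pmul_nonzero:
  assumes "is_pdo P" "is_pdo Q" "P \<noteq> (\<lambda>_. 0)" "Q \<noteq> (\<lambda>_. 0)"
  shows "pmul S P Q \<noteq> (\<lambda>_. 0)"
proof -
  obtain NP NQ where "vanishes_above P NP" "vanishes_above Q NQ" using assms(1,2) by (auto simp: is_pdo_iff_vanishes_above)
  then obtain dP dQ where "P dP \<noteq> 0" "vanishes_above P dP" "Q dQ \<noteq> 0" "vanishes_above Q dQ"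
    using exists_leading_index assms(3,4) by meson
  then have "pmul S P Q (dP + dQ) \<noteq> 0" using pmul_leading by simp
  then show ?thesis by (metis)
qed

text \<open>A left inverse C of an operator B with leading term B n \<partial>^n is computed coefficient by
  coefficient.  The list inv_coeffs B n e holds the coefficients of \<partial>^(-n), ..., \<partial>^(-n-e+1)
  of C (read off by list_coeff); the next one is the unique value making the coefficient of
  \<partial>^(-e) in C B equal to that of 1, inv_residual being the contribution of the earlier ones.\<close>

definition list_coeff :: "'k list \<Rightarrow> int \<Rightarrow> int \<Rightarrow> 'k" where
  "list_coeff xs n m = (if m \<le> -n \<and> nat (-n - m) < length xs then xs ! nat (-n - m) else 0)"

definition inv_residual :: "'k op \<Rightarrow> int \<Rightarrow> 'k list \<Rightarrow> nat \<Rightarrow> 'k" where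
  "inv_residual B n xs e = (\<Sum>m\<in>{- int e - n + 1..-n}. \<Sum>k\<le>e. (of_int m gchoose k) * list_coeff xs n m * ders S k (B (- int e - m + int k)))"

primrec inv_coeffs :: "'k op \<Rightarrow> int \<Rightarrow> nat \<Rightarrow> 'k list" where
  "inv_coeffs B n 0 = []"
| "inv_coeffs B n (Suc e) = inv_coeffs B n e @ [((if e = 0 then 1 else 0) - inv_residual B n (inv_coeffs B n e) e) / B n]"

definition inv_op :: "'k op \<Rightarrow> int \<Rightarrow> 'k op" where
  "inv_op B n m = (if m \<le> -n then inv_coeffs B n (Suc (nat (-n - m))) ! nat (-n - m) else 0)"

lemma length_inv_coeffs: "length (inv_coeffs B n e) = e"
  by (induction e) auto

lemma inv_coeffs_prefix: "i < e \<Longrightarrow> inv_coeffs B n (e + d) ! i = inv_coeffs B n e ! i"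
  by (induction d) (auto simp: nth_append length_inv_coeffs)

lemma inv_coeffs_nth_eq: "i < e \<Longrightarrow> i < e' \<Longrightarrow> inv_coeffs B n e' ! i = inv_coeffs B n e ! i"
proof -
  assume a: "i < e" "i < e'"
  show ?thesis
  proof (cases "e \<le> e'")
    case True then show ?thesis using inv_coeffs_prefix[OF a(1), of B n "e' - e"] by simp
  next
    case False then show ?thesis using inv_coeffs_prefix[OF a(2), of B n "e - e'"] by simp
  qed
qed

lemma inv_op_inv_coeffs: "i < e \<Longrightarrow> inv_op B n (-n - int i) = inv_coeffs B n e ! i"
  unfolding inv_op_def using inv_coeffs_nth_eq[of i "Suc i" e B n] by simp

lemma list_coeff_inv_coeffs: "m \<le> -n \<Longrightarrow> nat (-n - m) < e \<Longrightarrow> list_coeff (inv_coeffs B n e) n m = inv_op B n m"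
  unfolding list_coeff_def using inv_op_inv_coeffs[of "nat (-n - m)" e B n] by (simp add: length_inv_coeffs)

lemma inv_op_recursion: "inv_op B n (-n - int e) = ((if e = 0 then 1 else 0) - inv_residual B n (inv_coeffs B n e) e) / B n"
  using inv_op_inv_coeffs[of e "Suc e" B n] by (simp add: nth_append length_inv_coeffs)

lemma vanishes_above_inv_op: "vanishes_above (inv_op B n) (-n)"
  unfolding vanishes_above_def inv_op_def by auto

lemma pmul_inv_op:
  assumes B: "vanishes_above B n" and Bn: "B n \<noteq> 0"
  shows "pmul S (inv_op B n) B = op_one"
proof
  fix j
  show "pmul S (inv_op B n) B j = op_one j"
  proof (cases "j > 0")
    case True
    have "vanishes_above (pmul S (inv_op B n) B) (-n + n)" by (rule vanishes_above_pmul[OF vanishes_above_inv_op B])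
    then show ?thesis using True unfolding vanishes_above_def op_one_def by simp
  next
    case False
    obtain e where j: "j = - int e" using False by (intro that[of "nat (-j)"]) simp
    let ?C = "inv_op B n"
    have "pmul S ?C B j = (\<Sum>(m, k)\<in>{j - n..-n} \<times> {..nat (- n + n - j)}. pmul_term ?C B j m k)"
      by (rule pmul_eq_sum_box[OF vanishes_above_inv_op B])
    also have "\<dots> = (\<Sum>m\<in>{- int e - n..-n}. \<Sum>k\<le>e. pmul_term ?C B j m k)"
      by (simp add: j sum.cartesian_product)
    also have "{- int e - n..-n} = insert (- int e - n) {- int e - n + 1..-n}" by auto
    also have "(\<Sum>m\<in>insert (- int e - n) {- int e - n + 1..-n}. \<Sum>k\<le>e. pmul_term ?C B j m k)
       = (\<Sum>k\<le>e. pmul_term ?C B j (- int e - n) k) + (\<Sum>m\<in>{- int e - n + 1..-n}. \<Sum>k\<le>e. pmul_term ?C B j m k)"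
      by (rule sum.insert) auto
    also have "(\<Sum>k\<le>e. pmul_term ?C B j (- int e - n) k) = (\<Sum>k\<in>{0}. pmul_term ?C B j (- int e - n) k)"
    proof (rule sum.mono_neutral_right)
      show "\<forall>k\<in>{..e} - {0}. pmul_term ?C B j (- int e - n) k = 0"
        using B by (auto simp: pmul_term_def j vanishes_above_def)
    qed auto
    also have "\<dots> = ?C (- int e - n) * B n" by (simp add: pmul_term_def j)
    also have "(\<Sum>m\<in>{- int e - n + 1..-n}. \<Sum>k\<le>e. pmul_term ?C B j m k) = inv_residual B n (inv_coeffs B n e) e"
      unfolding inv_residual_def by (intro sum.cong refl) (auto simp: pmul_term_def j list_coeff_inv_coeffs)
    finally have fin: "pmul S ?C B j = ?C (- int e - n) * B n + inv_residual B n (inv_coeffs B n e) e" .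
    have ee: "- int e - n = -n - int e" by simp
    have ct: "?C (- int e - n) * B n = (if e = 0 then 1 else 0) - inv_residual B n (inv_coeffs B n e) e"
      unfolding ee inv_op_recursion using Bn by simp
    show ?thesis unfolding fin ct by (simp add: op_one_def j)
  qed
qed

lemma pmul_eq_zero_left_cancel:
  assumes "is_pdo W" "is_pdo B" "B \<noteq> (\<lambda>_. 0)" "pmul S W B = (\<lambda>_. 0)"
  shows "W = (\<lambda>_. 0)"
  using pmul_nonzero[OF assms(1,2) _ assms(3)] assms(4) by blast

lemma pmul_eq_zero_right_cancel:
  assumes "is_pdo L" "is_pdo W" "L \<noteq> (\<lambda>_. 0)" "pmul S L W = (\<lambda>_. 0)"
  shows "W = (\<lambda>_. 0)"
  using pmul_nonzero[OF assms(1,2) assms(3)] assms(4) by blast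

lemma exists_left_inverse:
  assumes "is_pdo B" "B \<noteq> (\<lambda>_. 0)"
  obtains C where "is_pdo C" "pmul S C B = op_one"
proof -
  obtain N where "vanishes_above B N" using assms(1) by (auto simp: is_pdo_iff_vanishes_above)
  then obtain n where "B n \<noteq> 0" "vanishes_above B n" using exists_leading_index assms(2) by blast
  then show thesis
    using that[of "inv_op B n"] pmul_inv_op vanishes_above_inv_op is_pdo_iff_vanishes_above by blast
qed

lemma left_inverse_imp_right_inverse:
  assumes B: "is_pdo B" "B \<noteq> (\<lambda>_. 0)" and C: "is_pdo C" and CB: "pmul S C B = op_one"
  shows "pmul S B C = op_one"
proof -
  let ?W = "\<lambda>m. pmul S B C m - op_one m"
  have "pmul S ?W B = (\<lambda>j. pmul S (pmul S B C) B j - pmul S op_one B j)"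
    by (rule pmul_diff_left[OF is_pdo_pmul[OF B(1) C] is_pdo_op_one B(1)])
  also have "pmul S (pmul S B C) B = pmul S B (pmul S C B)" by (rule pmul_assoc[OF B(1) C B(1)])
  finally have "pmul S ?W B = (\<lambda>_. 0)" by (simp add: CB pmul_one_right[OF B(1)] pmul_one_left[OF B(1)])
  then have "?W = (\<lambda>_. 0)"
    by (rule pmul_eq_zero_left_cancel[OF is_pdo_diff[OF is_pdo_pmul[OF B(1) C] is_pdo_op_one] B])
  then show ?thesis by (auto simp: fun_eq_iff)
qed

lemma pinv_inverse:
  assumes B: "is_pdo B" "B \<noteq> (\<lambda>_. 0)"
  shows "is_pdo (pinv S B)" "pmul S (pinv S B) B = op_one" "pmul S B (pinv S B) = op_one"
proof -
  obtain C where C: "is_pdo C" and CB: "pmul S C B = op_one" using exists_left_inverse[OF B] .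
  have BC: "pmul S B C = op_one" by (rule left_inverse_imp_right_inverse[OF B C CB])
  have unique: "C' = C" if "is_pdo C'" "pmul S C' B = op_one" for C'
  proof -
    have "C' = pmul S C' (pmul S B C)" using BC pmul_one_right[OF that(1)] by simp
    also have "\<dots> = pmul S (pmul S C' B) C" using pmul_assoc[OF that(1) B(1) C] by simp
    also have "\<dots> = C" using that(2) pmul_one_left[OF C] by simp
    finally show ?thesis .
  qed
  have "pinv S B = C"
    unfolding pinv_def by (rule the_equality) (use C CB BC unique in blast)+
  then show "is_pdo (pinv S B)" "pmul S (pinv S B) B = op_one" "pmul S B (pinv S B) = op_one"
    using C CB BC by simp_all
qed

lemma pmul_pinv_cancel_right:
  assumes "is_pdo A" "is_pdo B" "B \<noteq> (\<lambda>_. 0)"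
  shows "pmul S (pmul S A (pinv S B)) B = A"
  using pmul_assoc[OF assms(1) pinv_inverse(1)[OF assms(2,3)] assms(2)] pinv_inverse(2)[OF assms(2,3)]
    pmul_one_right[OF assms(1)] by simp

end

section \<open>Differential operators and Frechet derivatives\<close>

lemma is_dop_imp_is_pdo: "is_dop P \<Longrightarrow> is_pdo P"
  by (simp add: is_dop_def)

lemma dop_negative: "is_dop P \<Longrightarrow> j < 0 \<Longrightarrow> P j = 0"
  by (simp add: is_dop_def)

lemma dop_vanishes_above_nat: "is_dop P \<Longrightarrow> \<exists>N::nat. vanishes_above P (int N)"
proof -
  assume "is_dop P"
  then obtain M where "vanishes_above P M" by (auto simp: is_dop_def is_pdo_iff_vanishes_above)
  then have "vanishes_above P (int (nat M))" by (rule vanishes_above_mono) simp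
  then show ?thesis by blast
qed

context diff_algebra
begin

lemma is_dop_Dfr: "is_dop (Dfr S F)"
proof -
  obtain M where M: "\<forall>n\<in>{n. pd S n F \<noteq> 0}. n \<le> M"
    using finite_pd_support finite_nat_set_iff_bounded_le by blast
  have "\<forall>j>int M. Dfr S F j = 0" using M by (auto simp: Dfr_def)
  then show ?thesis unfolding is_dop_def is_pdo_def Dfr_def by auto
qed

lemma is_pdo_Dfr [simp]: "is_pdo (Dfr S F)"
  using is_dop_Dfr is_dop_imp_is_pdo by blast

lemma Dfr_ders:
  "Dfr S (ders S k x) j = (\<Sum>i\<le>k. of_nat (k choose i) * ders S i (Dfr S x (j - int k + int i)))"
proof (induction k arbitrary: j)
  case 0 then show ?case by simp
next
  case (Suc k)
  have "Dfr S (ders S (Suc k) x) j = tot S (Dfr S (ders S k x) j) + Dfr S (ders S k x) (j - 1)"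
    by (simp add: ders_Suc Dfr_tot)
  also have "\<dots> = (\<Sum>i\<le>k. of_nat (k choose i) * ders S (Suc i) (Dfr S x (j - int k + int i)))
      + (\<Sum>i\<le>k. of_nat (k choose i) * ders S i (Dfr S x (j - int (Suc k) + int i)))"
    unfolding Suc.IH by (simp add: derivation_sum[OF tot_derivation] derivation_mult[OF tot_derivation] derivation_of_nat[OF tot_derivation] ders_Suc algebra_simps)
  also have "(\<Sum>i\<le>k. of_nat (k choose i) * ders S (Suc i) (Dfr S x (j - int k + int i)))
      = (\<Sum>i\<le>Suc k. of_nat (k choose (i - 1)) * (if i = 0 then 0 else 1) * ders S i (Dfr S x (j - int (Suc k) + int i)))"
    by (subst sum.atMost_Suc_shift) (simp add: algebra_simps)
  also have "(\<Sum>i\<le>k. of_nat (k choose i) * ders S i (Dfr S x (j - int (Suc k) + int i)))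
      = (\<Sum>i\<le>Suc k. of_nat (k choose i) * ders S i (Dfr S x (j - int (Suc k) + int i)))"
    by simp
  finally have "Dfr S (ders S (Suc k) x) j = (\<Sum>i\<le>Suc k. (of_nat (k choose (i - 1)) * (if i = 0 then 0 else 1)
      + of_nat (k choose i)) * ders S i (Dfr S x (j - int (Suc k) + int i)))"
    by (simp add: sum.distrib algebra_simps)
  also have "\<dots> = (\<Sum>i\<le>Suc k. of_nat (Suc k choose i) * ders S i (Dfr S x (j - int (Suc k) + int i)))"
  proof (rule sum.cong)
    fix i assume "i \<in> {..Suc k}"
    show "(of_nat (k choose (i - 1)) * (if i = 0 then 0 else 1) + of_nat (k choose i)) * ders S i (Dfr S x (j - int (Suc k) + int i))
      = of_nat (Suc k choose i) * ders S i (Dfr S x (j - int (Suc k) + int i))"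
      by (cases i) (simp_all add: algebra_simps)
  qed simp
  finally show ?case .
qed

lemma dapp_sum:
  assumes "vanishes_above P (int N)"
  shows "dapp S P F = (\<Sum>k\<le>N. P (int k) * ders S k F)"
  unfolding dapp_def by (rule sum.mono_neutral_left) (auto dest: vanishes_aboveD[OF assms])

lemma DopF_sum:
  assumes "vanishes_above P (int N)" "0 \<le> j"
  shows "DopF S P F j = (\<Sum>k\<le>N. ders S k F * pd S (nat j) (P (int k)))"
  unfolding DopF_def using assms(2) by simp (rule sum.mono_neutral_left, auto dest: vanishes_aboveD[OF assms(1)] simp: derivation_zero[OF pd_derivation])

lemma pmul_dop_eq_sum:
  assumes P: "is_dop P" "vanishes_above P (int N)" and Q: "is_pdo Q"
  shows "pmul S P Q j = (\<Sum>k\<le>N. \<Sum>i\<le>k. of_nat (k choose i) * P (int k) * ders S i (Q (j - int k + int i)))"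
proof -
  obtain NQ where bQ: "vanishes_above Q NQ" using Q by (auto simp: is_pdo_iff_vanishes_above)
  let ?I = "Sigma {..N} (\<lambda>k. {..k})"
  have inj: "inj_on (\<lambda>(k, i). (int k, i)) ?I" unfolding inj_on_def by auto
  have "pmul S P Q j = Sum_any (\<lambda>(m, i). pmul_term P Q j m i)" by (rule pmul_eq_Sum_any[OF P(2) bQ])
  also have "\<dots> = (\<Sum>x\<in>(\<lambda>(k, i). (int k, i)) ` ?I. (case x of (m, i) \<Rightarrow> pmul_term P Q j m i))"
  proof (rule Sum_any_eq_sum_superset)
    fix x assume nz: "(case x of (m, i) \<Rightarrow> pmul_term P Q j m i) \<noteq> 0"
    obtain m i where x: "x = (m, i)" by (cases x)
    have Pm: "P m \<noteq> 0" and g: "(of_int m gchoose i :: 'k) \<noteq> 0" using nz unfolding x pmul_term_def by auto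
    have m0: "0 \<le> m" using Pm dop_negative[OF P(1)] by force
    have mN: "m \<le> int N" using vanishes_aboveD[OF P(2) Pm] .
    have "i \<le> nat m"
    proof (rule ccontr)
      assume "\<not> i \<le> nat m"
      then have "(of_int m gchoose i :: 'k) = of_nat (nat m choose i)" using m0
        by (simp add: binomial_gbinomial)
      then show False using g \<open>\<not> i \<le> nat m\<close> by simp
    qed
    then show "x \<in> (\<lambda>(k, i). (int k, i)) ` ?I" using m0 mN unfolding x
      by (intro image_eqI[of _ _ "(nat m, i)"]) auto
  qed simp
  also have "\<dots> = (\<Sum>(k, i)\<in>?I. pmul_term P Q j (int k) i)"
    by (subst sum.reindex[OF inj]) (simp add: case_prod_beta)
  also have "\<dots> = (\<Sum>k\<le>N. \<Sum>i\<le>k. pmul_term P Q j (int k) i)"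
    by (simp add: sum.Sigma)
  also have "\<dots> = (\<Sum>k\<le>N. \<Sum>i\<le>k. of_nat (k choose i) * P (int k) * ders S i (Q (j - int k + int i)))"
    by (simp add: pmul_term_def binomial_gbinomial)
  finally show ?thesis .
qed

lemma Dfr_dapp:
  assumes P: "is_dop P"
  shows "Dfr S (dapp S P F) j = DopF S P F j + pmul S P (Dfr S F) j"
proof -
  obtain N where bP: "vanishes_above P (int N)" using dop_vanishes_above_nat[OF P] by blast
  have pm: "pmul S P (Dfr S F) j = (\<Sum>k\<le>N. \<Sum>i\<le>k. of_nat (k choose i) * P (int k) * ders S i (Dfr S F (j - int k + int i)))"
    by (rule pmul_dop_eq_sum[OF P bP is_dop_imp_is_pdo[OF is_dop_Dfr]])
  show ?thesis
  proof (cases "0 \<le> j")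
    case False
    then have "pmul S P (Dfr S F) j = 0" unfolding pm by (auto intro!: sum.neutral simp: Dfr_def)
    then show ?thesis using False by (simp add: Dfr_def DopF_def)
  next
    case True
    have "Dfr S (dapp S P F) j = pd S (nat j) (\<Sum>k\<le>N. P (int k) * ders S k F)"
      using True by (simp add: Dfr_def dapp_sum[OF bP])
    also have "\<dots> = (\<Sum>k\<le>N. ders S k F * pd S (nat j) (P (int k))) + (\<Sum>k\<le>N. P (int k) * Dfr S (ders S k F) j)"
      using True by (simp add: derivation_sum[OF pd_derivation] derivation_mult[OF pd_derivation] sum.distrib Dfr_def algebra_simps)
    also have "(\<Sum>k\<le>N. P (int k) * Dfr S (ders S k F) j) = pmul S P (Dfr S F) j"
      unfolding pm Dfr_ders by (simp add: sum_distrib_left algebra_simps)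
    finally show ?thesis using DopF_sum[OF bP True] by simp
  qed
qed

lemma is_pdo_DopF [simp]:
  assumes P: "is_dop P" shows "is_pdo (DopF S P F)"
proof -
  obtain N where bP: "vanishes_above P (int N)" using dop_vanishes_above_nat[OF P] by blast
  have fin: "finite (\<Union>k\<le>N. {n. pd S n (P (int k)) \<noteq> 0})" using finite_pd_support by simp
  then obtain M where M: "\<forall>n\<in>(\<Union>k\<le>N. {n. pd S n (P (int k)) \<noteq> 0}). n \<le> M"
    using finite_nat_set_iff_bounded_le by blast
  have "DopF S P F j = 0" if j: "j > int M" for j
  proof -
    have "pd S (nat j) (P (int k)) = 0" if "k \<le> N" for k
    proof (rule ccontr)
      assume "pd S (nat j) (P (int k)) \<noteq> 0"
      then have "nat j \<in> (\<Union>k\<le>N. {n. pd S n (P (int k)) \<noteq> 0})" using that by blast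
      then have "nat j \<le> M" using M by blast
      then show False using j by simp
    qed
    then show ?thesis using DopF_sum[OF bP, of j F] j by simp
  qed
  then show ?thesis unfolding is_pdo_def by blast
qed

lemma is_pdo_bidF [simp]:
  assumes M: "is_bidiff M" shows "is_pdo (bidF S M F)"
proof -
  have fin: "finite (snd ` {(k,l). M k l \<noteq> 0})" using M unfolding is_bidiff_def by simp
  then obtain L where L: "\<forall>l\<in>snd ` {(k,l). M k l \<noteq> 0}. l \<le> L"
    using finite_nat_set_iff_bounded_le by blast
  have "bidF S M F j = 0" if j: "j > int L" for j
  proof -
    have "{k. M k (nat j) \<noteq> 0} = {}"
    proof (rule ccontr)
      assume "{k. M k (nat j) \<noteq> 0} \<noteq> {}"
      then obtain k where "M k (nat j) \<noteq> 0" by blast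
      then have "nat j \<le> L" using L by force
      then show False using j by simp
    qed
    then show ?thesis unfolding bidF_def by simp
  qed
  then show ?thesis unfolding is_pdo_def by blast
qed

end

section \<open>The Lie derivative\<close>

context diff_algebra
begin

lemma is_pdo_Lie [simp]: "is_pdo X \<Longrightarrow> is_pdo (Lie S G X)"
  unfolding Lie_def by simp

lemma Lie_pmul:
  assumes X: "is_pdo X" and Y: "is_pdo Y"
  shows "Lie S G (pmul S X Y) = (\<lambda>j. pmul S (Lie S G X) Y j + pmul S X (Lie S G Y) j)"
proof -
  let ?D = "Dfr S G"
  have a1: "pmul S ?D (pmul S X Y) = pmul S (pmul S ?D X) Y" by (rule pmul_assoc[symmetric]) (use X Y in auto)
  have a2: "pmul S (pmul S X Y) ?D = pmul S X (pmul S Y ?D)" by (rule pmul_assoc) (use X Y in auto)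
  have a3: "pmul S (pmul S X ?D) Y = pmul S X (pmul S ?D Y)" by (rule pmul_assoc) (use X Y in auto)
  have l1: "pmul S (Lie S G X) Y = (\<lambda>j. pmul S (Xop S G X) Y j - (pmul S (pmul S ?D X) Y j - pmul S (pmul S X ?D) Y j))"
    unfolding Lie_def using X Y by (simp add: pmul_diff_left)
  have l2: "pmul S X (Lie S G Y) = (\<lambda>j. pmul S X (Xop S G Y) j - (pmul S X (pmul S ?D Y) j - pmul S X (pmul S Y ?D) j))"
    unfolding Lie_def using X Y by (simp add: pmul_diff_right)
  show ?thesis unfolding l1 l2 unfolding Lie_def Xop_pmul[OF X Y] a1 a2 a3 by (simp add: algebra_simps)
qed

lemma Lie_one: "Lie S G op_one = (\<lambda>_. 0)"
  unfolding Lie_def Xop_def pmul_one_left[OF is_pdo_Dfr] pmul_one_right[OF is_pdo_Dfr]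
  by (rule ext) (simp add: op_one_def derivation_zero[OF Xf_derivation] derivation_one[OF Xf_derivation])

lemma Lie_pmul_inverse_right:
  assumes A: "is_pdo A" and B: "is_pdo B" and C: "is_pdo C" and CB: "pmul S C B = op_one"
  shows "pmul S (Lie S K (pmul S A C)) B = (\<lambda>j. Lie S K A j - pmul S (pmul S A C) (Lie S K B) j)"
proof -
  have h2: "(\<lambda>j. pmul S (Lie S K C) B j + pmul S C (Lie S K B) j) = (\<lambda>_. 0)"
    using Lie_pmul[OF C B, of K] CB Lie_one by simp
  have h3: "pmul S (Lie S K C) B = (\<lambda>j. - pmul S C (Lie S K B) j)"
  proof
    fix j show "pmul S (Lie S K C) B j = - pmul S C (Lie S K B) j"
      using fun_cong[OF h2, of j] by (simp add: add_eq_0_iff)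
  qed
  have "pmul S (Lie S K (pmul S A C)) B = (\<lambda>j. pmul S (pmul S (Lie S K A) C) B j + pmul S (pmul S A (Lie S K C)) B j)"
    unfolding Lie_pmul[OF A C] using A B C by (simp add: pmul_add_left)
  also have "\<dots> = (\<lambda>j. pmul S (Lie S K A) (pmul S C B) j + pmul S A (pmul S (Lie S K C) B) j)"
    using A B C by (simp add: pmul_assoc)
  also have "\<dots> = (\<lambda>j. Lie S K A j - pmul S (pmul S A C) (Lie S K B) j)"
    unfolding h3 CB using A B C by (simp add: pmul_uminus_right pmul_one_right pmul_assoc)
  finally show ?thesis .
qed

lemma hereditary_mult_denominator:
  assumes A: "is_pdo A" and B: "is_pdo B" "B \<noteq> (\<lambda>_. 0)"
    and her: "Lie S G (pmul S A (pinv S B)) = pmul S (pmul S A (pinv S B)) (Lie S H (pmul S A (pinv S B)))"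
  defines "L \<equiv> pmul S A (pinv S B)"
  shows "(\<lambda>j. Lie S G A j - pmul S L (Lie S G B) j) = pmul S L (\<lambda>j. Lie S H A j - pmul S L (Lie S H B) j)"
proof -
  note C = pinv_inverse[OF B]
  have "(\<lambda>j. Lie S G A j - pmul S L (Lie S G B) j) = pmul S (Lie S G L) B"
    unfolding L_def by (rule Lie_pmul_inverse_right[OF A B(1) C(1,2), symmetric])
  also have "\<dots> = pmul S (pmul S L (Lie S H L)) B"
    using her unfolding L_def by simp
  also have "\<dots> = pmul S L (pmul S (Lie S H L) B)"
    by (rule pmul_assoc) (use A B C in \<open>simp_all add: L_def\<close>)
  also have "pmul S (Lie S H L) B = (\<lambda>j. Lie S H A j - pmul S L (Lie S H B) j)"
    unfolding L_def by (rule Lie_pmul_inverse_right[OF A B(1) C(1,2)])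
  finally show ?thesis .
qed

end

section \<open>Integrability of the pencil\<close>

context diff_algebra
begin

lemma dapp_zero_op [simp]: "dapp S (\<lambda>_. 0) F = 0"
  unfolding dapp_def by simp

lemma DopF_zero_op [simp]: "DopF S (\<lambda>_. 0) F = (\<lambda>_. 0)"
  unfolding DopF_def by (simp add: fun_eq_iff)

lemma Xop_zero [simp]: "Xop S 0 P = (\<lambda>_. 0)" "Xop S G (\<lambda>_. 0) = (\<lambda>_. 0)"
  unfolding Xop_def Xf_def by (simp_all add: derivation_zero[OF pd_derivation])

lemma hereditary_cross_identity:
  assumes A: "is_dop A" and B: "is_dop B" "B \<noteq> (\<lambda>_. 0)"
    and MA: "is_pdo MA" and NB: "is_pdo NB" and MA_zero: "A = (\<lambda>_. 0) \<Longrightarrow> MA = (\<lambda>_. 0)"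
    and IA: "(\<lambda>j. Xop S (dapp S A F) A j - pmul S (DopF S A F) A j) = pmul S A MA"
    and IB: "(\<lambda>j. Xop S (dapp S B F) B j - pmul S (DopF S B F) B j) = pmul S B NB"
    and her: "Lie S (dapp S A F) (pmul S A (pinv S B))
        = pmul S (pmul S A (pinv S B)) (Lie S (dapp S B F) (pmul S A (pinv S B)))"
  shows "Xop S (dapp S A F) B j + Xop S (dapp S B F) A j - pmul S (DopF S A F) B j - pmul S (DopF S B F) A j
       = pmul S A NB j + pmul S B MA j"
proof (cases "A = (\<lambda>_. 0)")
  case True
  then show ?thesis
    using MA_zero by (simp add: pmul_zero_left pmul_zero_right)
next
  case False
  define G where "G = dapp S A F"
  define H where "H = dapp S B F"
  define L where "L = pmul S A (pinv S B)"
  define EA where "EA = DopF S A F"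
  define EB where "EB = DopF S B F"
  define D where "D = Dfr S F"
  have Ap: "is_pdo A" and Bp: "is_pdo B" using A B is_dop_imp_is_pdo by auto
  note C = pinv_inverse[OF Bp B(2)]
  have Lp: "is_pdo L" unfolding L_def using Ap C by simp
  have EAp: "is_pdo EA" unfolding EA_def using A by simp
  have EBp: "is_pdo EB" unfolding EB_def using B(1) by simp
  have Dp: "is_pdo D" unfolding D_def by simp
  have LB: "pmul S L B = A" unfolding L_def by (rule pmul_pinv_cancel_right[OF Ap Bp B(2)])
  have A_eq_L_B: "pmul S A X = pmul S L (pmul S B X)" if "is_pdo X" for X
    using pmul_assoc[OF Lp Bp that] LB by simp
  have DG: "Dfr S G = (\<lambda>j. EA j + pmul S A D j)" unfolding G_def EA_def D_def
    by (rule ext) (rule Dfr_dapp[OF A])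
  have DH: "Dfr S H = (\<lambda>j. EB j + pmul S B D j)" unfolding H_def EB_def D_def
    by (rule ext) (rule Dfr_dapp[OF B(1)])
  have XGA: "Xop S G A = (\<lambda>j. pmul S EA A j + pmul S A MA j)"
    using IA unfolding G_def EA_def by (auto simp: fun_eq_iff algebra_simps dest: fun_cong)
  have XHB: "Xop S H B = (\<lambda>j. pmul S EB B j + pmul S B NB j)"
    using IB unfolding H_def EB_def by (auto simp: fun_eq_iff algebra_simps dest: fun_cong)
  define W where "W = (\<lambda>j. pmul S B MA j + pmul S A NB j - (Xop S G B j + Xop S H A j - pmul S EA B j - pmul S EB A j))"
  \<comment> \<open>after expanding the Lie derivatives, all terms outside W cancel because A = L B\<close>
  have "pmul S L W j = (Lie S G A j - pmul S L (Lie S G B) j) - pmul S L (\<lambda>j. Lie S H A j - pmul S L (Lie S H B) j) j" for j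
    unfolding W_def Lie_def DG DH XGA XHB using Ap Bp Lp EAp EBp Dp MA NB
    by (simp add: pmul_add_left pmul_add_right pmul_diff_left pmul_diff_right pmul_assoc A_eq_L_B algebra_simps)
  then have "pmul S L W = (\<lambda>_. 0)"
    using hereditary_mult_denominator[OF Ap Bp B(2) her] unfolding G_def H_def L_def
    by (auto simp: fun_eq_iff dest: fun_cong)
  moreover have "L \<noteq> (\<lambda>_. 0)" using LB False pmul_zero_left by metis
  moreover have "is_pdo W" unfolding W_def using Ap Bp EAp EBp MA NB by simp
  ultimately have "W = (\<lambda>_. 0)" using pmul_eq_zero_right_cancel[OF Lp] by blast
  then show ?thesis using fun_cong[of W "\<lambda>_. 0" j] unfolding W_def G_def H_def EA_def EB_def
    by (simp add: algebra_simps)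
qed

lemma dapp_pencil:
  assumes A: "is_dop A" and B: "is_dop B" and c: "c \<in> constsV S"
  shows "dapp S (\<lambda>j. A j + c * B j) F = dapp S A F + c * dapp S B F"
proof -
  obtain N1 N2 where "vanishes_above A (int N1)" "vanishes_above B (int N2)" using dop_vanishes_above_nat A B by blast
  then have b: "vanishes_above A (int (max N1 N2))" "vanishes_above B (int (max N1 N2))" by (auto intro: vanishes_above_mono)
  then have b2: "vanishes_above (\<lambda>j. A j + c * B j) (int (max N1 N2))" unfolding vanishes_above_def by auto
  show ?thesis unfolding dapp_sum[OF b2] dapp_sum[OF b(1)] dapp_sum[OF b(2)]
    by (simp add: sum.distrib sum_distrib_left algebra_simps)
qed

lemma Xop_pencil_field: "c \<in> constsV S \<Longrightarrow> Xop S (G1 + c * G2) X j = Xop S G1 X j + c * Xop S G2 X j"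
  unfolding Xop_def by (simp add: Xf_add_field Xf_const_mult_field)

lemma Xop_pencil: "c \<in> constsV S \<Longrightarrow> Xop S G (\<lambda>j. A j + c * B j) j = Xop S G A j + c * Xop S G B j"
  unfolding Xop_def by (simp add: derivation_add[OF Xf_derivation] derivation_mult[OF Xf_derivation] Xf_const)

lemma DopF_pencil:
  assumes A: "is_dop A" and B: "is_dop B" and c: "c \<in> constsV S"
  shows "DopF S (\<lambda>j. A j + c * B j) F j = DopF S A F j + c * DopF S B F j"
proof (cases "0 \<le> j")
  case True
  obtain N1 N2 where "vanishes_above A (int N1)" "vanishes_above B (int N2)" using dop_vanishes_above_nat A B by blast
  then have b: "vanishes_above A (int (max N1 N2))" "vanishes_above B (int (max N1 N2))" by (auto intro: vanishes_above_mono)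
  then have b2: "vanishes_above (\<lambda>j. A j + c * B j) (int (max N1 N2))" unfolding vanishes_above_def by auto
  show ?thesis unfolding DopF_sum[OF b2 True] DopF_sum[OF b(1) True] DopF_sum[OF b(2) True]
    by (simp add: sum.distrib sum_distrib_left derivation_add[OF pd_derivation] derivation_mult[OF pd_derivation] pd_const[OF c] algebra_simps)
next
  case False then show ?thesis by (simp add: DopF_def)
qed

lemma bidF_pencil:
  assumes M: "is_bidiff M" and N: "is_bidiff N"
  shows "bidF S (\<lambda>k l. M k l + c * N k l) F j = bidF S M F j + c * bidF S N F j"
proof (cases "0 \<le> j")
  case True
  let ?T = "fst ` {(k,l). M k l \<noteq> 0} \<union> fst ` {(k,l). N k l \<noteq> 0}"
  have fT: "finite ?T" using M N unfolding is_bidiff_def by simp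
  have e: "(\<Sum>k\<in>{k. Q k (nat j) \<noteq> 0}. Q k (nat j) * ders S k F) = (\<Sum>k\<in>?T. Q k (nat j) * ders S k F)"
    if "\<And>k. Q k (nat j) \<noteq> 0 \<Longrightarrow> k \<in> ?T" for Q
    by (rule sum.mono_neutral_left) (use fT that in auto)
  have s1: "k \<in> ?T" if "M k (nat j) + c * N k (nat j) \<noteq> 0" for k
  proof -
    have "M k (nat j) \<noteq> 0 \<or> N k (nat j) \<noteq> 0" using that by auto
    then show ?thesis by (auto intro: image_eqI[of _ fst "(k, nat j)"])
  qed
  have s2: "k \<in> ?T" if "M k (nat j) \<noteq> 0" for k using that by (auto intro: image_eqI[of _ fst "(k, nat j)"])
  have s3: "k \<in> ?T" if "N k (nat j) \<noteq> 0" for k using that by (auto intro: image_eqI[of _ fst "(k, nat j)"])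
  show ?thesis unfolding bidF_def using True
    e[of "\<lambda>k l. M k l + c * N k l", OF s1] e[of M, OF s2] e[of N, OF s3]
    by (simp add: sum.distrib sum_distrib_left algebra_simps)
next
  case False then show ?thesis by (simp add: bidF_def)
qed

text \<open>For A = 0 every M witnesses integrability of A; M = 0 is the right choice, since
  the cross identity then reduces to B M_F = 0.\<close>

lemma integrable_op_witness:
  assumes "integrable_op S A"
  obtains M where "is_bidiff M"
    "\<forall>F\<in>V S. (\<lambda>j. Xop S (dapp S A F) A j - pmul S (DopF S A F) A j) = pmul S A (bidF S M F)"
    "A = (\<lambda>_. 0) \<longrightarrow> M = (\<lambda>_ _. 0)"
proof (cases "A = (\<lambda>_. 0)")
  case True
  have "is_bidiff (\<lambda>_ _. 0 :: 'k)" by (simp add: is_bidiff_def)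
  then show thesis by (rule that) (simp_all add: True pmul_zero_left)
next
  case False
  obtain M where "is_bidiff M"
    "\<forall>F\<in>V S. (\<lambda>j. Xop S (dapp S A F) A j - pmul S (DopF S A F) A j) = pmul S A (bidF S M F)"
    using assms unfolding integrable_op_def by blast
  then show thesis using False by (intro that) auto
qed

lemma integrable_pair_of_cross_identity:
  assumes A: "is_dop A" and B: "is_dop B" and M: "is_bidiff M" and N: "is_bidiff N"
    and IA: "\<And>F. F \<in> V S \<Longrightarrow> (\<lambda>j. Xop S (dapp S A F) A j - pmul S (DopF S A F) A j) = pmul S A (bidF S M F)"
    and IB: "\<And>F. F \<in> V S \<Longrightarrow> (\<lambda>j. Xop S (dapp S B F) B j - pmul S (DopF S B F) B j) = pmul S B (bidF S N F)"
    and cross: "\<And>F j. F \<in> V S \<Longrightarrow>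
      Xop S (dapp S A F) B j + Xop S (dapp S B F) A j - pmul S (DopF S A F) B j - pmul S (DopF S B F) A j
        = pmul S A (bidF S N F) j + pmul S B (bidF S M F) j"
  shows "integrable_pair S A B"
  unfolding integrable_pair_def Let_def
proof (intro exI conjI ballI ext)
  fix F lam j assume F: "F \<in> V S" and lam: "lam \<in> constsV S"
  let ?P = "\<lambda>j. A j + lam * B j"
  define G where "G = dapp S A F"
  define H where "H = dapp S B F"
  define EA where "EA = DopF S A F"
  define EB where "EB = DopF S B F"
  define MA where "MA = bidF S M F"
  define NB where "NB = bidF S N F"
  have Ap: "is_pdo A" and Bp: "is_pdo B" using A B is_dop_imp_is_pdo by auto
  have EAp: "is_pdo EA" and EBp: "is_pdo EB" unfolding EA_def EB_def using A B by simp_all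
  have MAp: "is_pdo MA" and NBp: "is_pdo NB" unfolding MA_def NB_def using M N by simp_all
  have d: "dapp S ?P F = G + lam * H" unfolding G_def H_def by (rule dapp_pencil[OF A B lam])
  have e: "DopF S ?P F = (\<lambda>j. EA j + lam * EB j)" unfolding EA_def EB_def
    by (rule ext) (rule DopF_pencil[OF A B lam])
  have q: "bidF S (\<lambda>k l. M k l + lam * N k l) F = (\<lambda>j. MA j + lam * NB j)" unfolding MA_def NB_def
    by (rule ext) (rule bidF_pencil[OF M N])
  have "Xop S G A j - pmul S EA A j = pmul S A MA j"
    using fun_cong[OF IA[OF F], of j] unfolding G_def EA_def MA_def by simp
  moreover have "Xop S H B j - pmul S EB B j = pmul S B NB j"
    using fun_cong[OF IB[OF F], of j] unfolding H_def EB_def NB_def by simp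
  moreover have "lam * (Xop S G B j + Xop S H A j)
      = lam * (pmul S A NB j + pmul S B MA j + pmul S EA B j + pmul S EB A j)"
    using cross[OF F, of j] unfolding G_def H_def EA_def EB_def MA_def NB_def by (simp add: algebra_simps)
  ultimately show "Xop S (dapp S ?P F) ?P j - pmul S (DopF S ?P F) ?P j
      = pmul S ?P (bidF S (\<lambda>k l. M k l + lam * N k l) F) j"
    unfolding d e q Xop_pencil_field[OF lam] Xop_pencil[OF lam] using Ap Bp EAp EBp MAp NBp
    by (simp add: pmul_add_left pmul_add_right pmul_scale_left pmul_const_right[OF lam] algebra_simps)
qed (use M N in auto)

end

theorem lemma3p9:
  fixes S :: "('k::field_char_0) dfa" and A B :: "'k op"
  assumes "diff_alg S"
    and "is_dop A" and "is_dop B" and "B \<noteq> (\<lambda>_. 0)"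
    and "integrable_op S A" and "integrable_op S B"
    and "hereditary S A B"
  shows "integrable_pair S A B"
proof -
  interpret diff_algebra S by (rule diff_algebra.intro) (rule assms(1))
  obtain M where M: "is_bidiff M"
      "\<forall>F\<in>V S. (\<lambda>j. Xop S (dapp S A F) A j - pmul S (DopF S A F) A j) = pmul S A (bidF S M F)"
      "A = (\<lambda>_. 0) \<longrightarrow> M = (\<lambda>_ _. 0)"
    using integrable_op_witness[OF assms(5)] by blast
  obtain N where N: "is_bidiff N"
      "\<forall>F\<in>V S. (\<lambda>j. Xop S (dapp S B F) B j - pmul S (DopF S B F) B j) = pmul S B (bidF S N F)"
    using integrable_op_witness[OF assms(6)] by blast
  show ?thesis
  proof (rule integrable_pair_of_cross_identity[OF assms(2,3) M(1) N(1) M(2)[rule_format] N(2)[rule_format]])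
    fix F j assume F: "F \<in> V S"
    have "A = (\<lambda>_. 0) \<Longrightarrow> bidF S M F = (\<lambda>_. 0)" using M(3) by (auto simp: bidF_def)
    then show "Xop S (dapp S A F) B j + Xop S (dapp S B F) A j - pmul S (DopF S A F) B j - pmul S (DopF S B F) A j
        = pmul S A (bidF S N F) j + pmul S B (bidF S M F) j"
      using assms(7) F M(1) N(1)
      by (intro hereditary_cross_identity[OF assms(2,3,4)] M(2)[rule_format] N(2)[rule_format]) (auto simp: hereditary_def Let_def)
  qed
qed

end
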